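(* Let $p$ be a prime, $d\geq4$ even, $\nu\geq0$, $n\geq2$, $q=p^f$ with $f\in\{1,2,\ldots\}\cup\{\infty\}$ (convention $p^\infty=0$, $f\geq2$ if $p=2$). Let $G=\langle x_1,\ldots,x_d\mid r_0,\ldots,r_\nu\rangle$ be a minimal pro-$p$ presentation with $r_0=x_1^q[x_1,{}_n\,x_2][x_3,x_4][x_5,x_6]\cdots[x_{d-1},x_d]\cdot s$, $r_1,\ldots,r_\nu\in S'$, $s\in S''$, $S$ the closed subgroup generated by $x_3,\ldots,x_d$. Let $\theta\colon G\to1+p\mathbb{Z}_p$ be an orientation such that $(G,\theta)$ is torsion-free. If $(G,\theta)$ is Kummerian, then $\theta(x_i)=1$ for $i=3,\ldots,d$, and either (i) $\theta(x_1)=1$ and $(\theta(x_2)^{-1}-1)^n=-q$; or (ii) $\theta(x_1)\neq1$ and $\theta(x_2)=1$ (which is possible only if $q=0$). In particular, if $-q\notin p^n\mathbb{Z}_p$, then $(G,\theta)$ is not Kummerian for any orientation $\theta\colon G\to1+p\mathbb{Z}_p$.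
   Context: Commutators $[x,y]=x^{-1}y^{-1}xy$, $[y,{}_k x]$ left-normed; $H'$, $H''$ closed commutator subgroups. An orientation is a continuous homomorphism $\theta\colon G\to1+p\mathbb{Z}_p$; $(G,\theta)$ is torsion-free if $p$ odd or $\theta(G)\subseteq1+4\mathbb{Z}_2$ when $p=2$. $(G,\theta)$ is Kummerian if, with $\mathbb{Z}_p(\theta)$ the module $\mathbb{Z}_p$ with action $g.\lambda=\theta(g)\lambda$, the map $H^1(G,\mathbb{Z}_p(\theta)/p^k)\to H^1(G,\mathbb{F}_p)$ is surjective for all $k\geq1$. *)

theory Defs
  imports "HOL-Analysis.Analysis" "HOL-Algebra.Algebra" "HOL-Library.Extended_Nat"
begin

text \<open>An element a of Z_p is represented by its residues a k in {0..p^k-1}, compatible.\<close>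

definition Zp :: "nat \<Rightarrow> (nat \<Rightarrow> int) set" where
  "Zp p = {a. \<forall>k. 0 \<le> a k \<and> a k < int p ^ k \<and> a (Suc k) mod int p ^ k = a k}"

definition zp_of_int :: "nat \<Rightarrow> int \<Rightarrow> (nat \<Rightarrow> int)" where
  "zp_of_int p z = (\<lambda>k. z mod int p ^ k)"

definition zp_one :: "nat \<Rightarrow> (nat \<Rightarrow> int)" where
  "zp_one p = zp_of_int p 1"

definition zp_add :: "nat \<Rightarrow> (nat \<Rightarrow> int) \<Rightarrow> (nat \<Rightarrow> int) \<Rightarrow> (nat \<Rightarrow> int)" where
  "zp_add p a b = (\<lambda>k. (a k + b k) mod int p ^ k)"

definition zp_neg :: "nat \<Rightarrow> (nat \<Rightarrow> int) \<Rightarrow> (nat \<Rightarrow> int)" where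
  "zp_neg p a = (\<lambda>k. (- a k) mod int p ^ k)"

definition zp_mult :: "nat \<Rightarrow> (nat \<Rightarrow> int) \<Rightarrow> (nat \<Rightarrow> int) \<Rightarrow> (nat \<Rightarrow> int)" where
  "zp_mult p a b = (\<lambda>k. (a k * b k) mod int p ^ k)"

fun zp_pow :: "nat \<Rightarrow> (nat \<Rightarrow> int) \<Rightarrow> nat \<Rightarrow> (nat \<Rightarrow> int)" where
  "zp_pow p a 0 = zp_one p"
| "zp_pow p a (Suc m) = zp_mult p (zp_pow p a m) a"

definition zp_inv :: "nat \<Rightarrow> (nat \<Rightarrow> int) \<Rightarrow> (nat \<Rightarrow> int)" where
  "zp_inv p a = (THE b. b \<in> Zp p \<and> zp_mult p a b = zp_one p)"

definition zp_q :: "nat \<Rightarrow> enat \<Rightarrow> (nat \<Rightarrow> int)" where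
  "zp_q p f = (case f of enat m \<Rightarrow> zp_of_int p (int p ^ m) | \<infinity> \<Rightarrow> zp_of_int p 0)"

definition zp_ideal_pow :: "nat \<Rightarrow> nat \<Rightarrow> (nat \<Rightarrow> int) set" where
  "zp_ideal_pow p n = {a \<in> Zp p. a n = 0}"

definition topgroup :: "('a, 'b) monoid_scheme \<Rightarrow> 'a topology \<Rightarrow> bool" where
  "topgroup G T \<longleftrightarrow> group G \<and> topspace T = carrier G
     \<and> continuous_map (prod_topology T T) T (\<lambda>(a, b). a \<otimes>\<^bsub>G\<^esub> b)
     \<and> continuous_map T T (\<lambda>a. inv\<^bsub>G\<^esub> a)"

definition pro_p_group :: "nat \<Rightarrow> ('a, 'b) monoid_scheme \<Rightarrow> 'a topology \<Rightarrow> bool" where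
  "pro_p_group p G T \<longleftrightarrow> topgroup G T \<and> compact_space T \<and> Hausdorff_space T
     \<and> (\<forall>x \<in> topspace T. connected_component_of_set T x = {x})
     \<and> (\<forall>N. openin T N \<and> N \<lhd> G \<longrightarrow> (\<exists>m. card (rcosets\<^bsub>G\<^esub> N) = p ^ m))"

definition cont_hom ::
  "('a, 'b) monoid_scheme \<Rightarrow> 'a topology \<Rightarrow> ('c, 'd) monoid_scheme \<Rightarrow> 'c topology \<Rightarrow> ('a \<Rightarrow> 'c) set" where
  "cont_hom G T H U = {h. h \<in> hom G H \<and> continuous_map T U h}"

text \<open>Free pro-p group on generators x 1, ..., x d: a pro-p group such that every assignment
  of the generators into a finite p-group extends uniquely to a continuous homomorphism
  (finite groups may be taken with carrier in nat up to isomorphism).\<close>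
definition free_pro_p :: "nat \<Rightarrow> ('a, 'b) monoid_scheme \<Rightarrow> 'a topology \<Rightarrow> nat \<Rightarrow> (nat \<Rightarrow> 'a) \<Rightarrow> bool" where
  "free_pro_p p F T d x \<longleftrightarrow> pro_p_group p F T \<and> (\<forall>i\<in>{1..d}. x i \<in> carrier F)
     \<and> (\<forall>(H :: nat monoid) y. group H \<and> finite (carrier H) \<and> (\<exists>m. card (carrier H) = p ^ m)
          \<and> (\<forall>i\<in>{1..d}. y i \<in> carrier H) \<longrightarrow>
          (\<exists>!h. h \<in> cont_hom F T H (discrete_topology (carrier H)) \<and> h \<in> extensional (carrier F)
                \<and> (\<forall>i\<in>{1..d}. h (x i) = y i)))"

definition comm :: "('a, 'b) monoid_scheme \<Rightarrow> 'a \<Rightarrow> 'a \<Rightarrow> 'a" where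
  "comm G a b = inv\<^bsub>G\<^esub> a \<otimes>\<^bsub>G\<^esub> inv\<^bsub>G\<^esub> b \<otimes>\<^bsub>G\<^esub> a \<otimes>\<^bsub>G\<^esub> b"

fun lcomm :: "('a, 'b) monoid_scheme \<Rightarrow> 'a \<Rightarrow> 'a \<Rightarrow> nat \<Rightarrow> 'a" where
  "lcomm G y x 0 = y"
| "lcomm G y x (Suc k) = comm G (lcomm G y x k) x"

fun comm_prod :: "('a, 'b) monoid_scheme \<Rightarrow> (nat \<Rightarrow> 'a) \<Rightarrow> nat \<Rightarrow> 'a" where
  "comm_prod G x 0 = \<one>\<^bsub>G\<^esub>"
| "comm_prod G x (Suc m) = comm_prod G x m \<otimes>\<^bsub>G\<^esub> comm G (x (2 * m + 3)) (x (2 * m + 4))"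

definition closed_gen :: "('a, 'b) monoid_scheme \<Rightarrow> 'a topology \<Rightarrow> 'a set \<Rightarrow> 'a set" where
  "closed_gen G T A = T closure_of (generate G A)"

definition closed_derived :: "('a, 'b) monoid_scheme \<Rightarrow> 'a topology \<Rightarrow> 'a set \<Rightarrow> 'a set" where
  "closed_derived G T H = closed_gen G T {comm G a b | a b. a \<in> H \<and> b \<in> H}"

definition closed_normal_gen :: "('a, 'b) monoid_scheme \<Rightarrow> 'a topology \<Rightarrow> 'a set \<Rightarrow> 'a set" where
  "closed_normal_gen G T A =
     closed_gen G T {inv\<^bsub>G\<^esub> g \<otimes>\<^bsub>G\<^esub> r \<otimes>\<^bsub>G\<^esub> g | g r. g \<in> carrier G \<and> r \<in> A}"

definition qpow :: "('a, 'b) monoid_scheme \<Rightarrow> nat \<Rightarrow> enat \<Rightarrow> 'a \<Rightarrow> 'a" where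
  "qpow G p f a = (case f of enat m \<Rightarrow> a [^]\<^bsub>G\<^esub> (p ^ m) | \<infinity> \<Rightarrow> \<one>\<^bsub>G\<^esub>)"

definition orientation :: "nat \<Rightarrow> ('a, 'b) monoid_scheme \<Rightarrow> 'a topology \<Rightarrow> ('a \<Rightarrow> nat \<Rightarrow> int) \<Rightarrow> bool" where
  "orientation p G T \<theta> \<longleftrightarrow>
     (\<forall>g\<in>carrier G. \<theta> g \<in> Zp p \<and> \<theta> g 1 = 1 mod int p)
     \<and> (\<forall>g\<in>carrier G. \<forall>h\<in>carrier G. \<theta> (g \<otimes>\<^bsub>G\<^esub> h) = zp_mult p (\<theta> g) (\<theta> h))
     \<and> (\<forall>k c. openin T {g \<in> carrier G. \<theta> g k = c})"

definition torsion_free_or :: "nat \<Rightarrow> ('a, 'b) monoid_scheme \<Rightarrow> ('a \<Rightarrow> nat \<Rightarrow> int) \<Rightarrow> bool" where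
  "torsion_free_or p G \<theta> \<longleftrightarrow> odd p \<or> (p = 2 \<and> (\<forall>g\<in>carrier G. \<theta> g 2 = 1))"

text \<open>continuous 1-cocycles G \<rightarrow> Z_p(\<theta>)/p^k (residues in {0..p^k-1})\<close>
definition cocycle :: "nat \<Rightarrow> ('a, 'b) monoid_scheme \<Rightarrow> 'a topology \<Rightarrow> ('a \<Rightarrow> nat \<Rightarrow> int) \<Rightarrow> nat
     \<Rightarrow> ('a \<Rightarrow> int) \<Rightarrow> bool" where
  "cocycle p G T \<theta> k c \<longleftrightarrow>
     (\<forall>g\<in>carrier G. 0 \<le> c g \<and> c g < int p ^ k)
     \<and> (\<forall>v. openin T {g \<in> carrier G. c g = v})
     \<and> (\<forall>g\<in>carrier G. \<forall>h\<in>carrier G. c (g \<otimes>\<^bsub>G\<^esub> h) = (c g + \<theta> g k * c h) mod int p ^ k)"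

definition coboundary :: "nat \<Rightarrow> ('a, 'b) monoid_scheme \<Rightarrow> ('a \<Rightarrow> nat \<Rightarrow> int) \<Rightarrow> nat
     \<Rightarrow> ('a \<Rightarrow> int) \<Rightarrow> bool" where
  "coboundary p G \<theta> k b \<longleftrightarrow> (\<exists>m. \<forall>g\<in>carrier G. b g = ((\<theta> g k - 1) * m) mod int p ^ k)"

text \<open>Kummerian: the reduction map H^1(G, Z_p(\<theta>)/p^k) \<rightarrow> H^1(G, F_p) is surjective for all k \<ge> 1,
  i.e. every class of H^1(G, F_p) = H^1(G, Z_p(\<theta>)/p) is the reduction of a class mod p^k.\<close>
definition kummerian :: "nat \<Rightarrow> ('a, 'b) monoid_scheme \<Rightarrow> 'a topology \<Rightarrow> ('a \<Rightarrow> nat \<Rightarrow> int) \<Rightarrow> bool" where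
  "kummerian p G T \<theta> \<longleftrightarrow>
     (\<forall>k\<ge>1. \<forall>c1. cocycle p G T \<theta> 1 c1 \<longrightarrow>
        (\<exists>c. cocycle p G T \<theta> k c \<and> (\<exists>b. coboundary p G \<theta> 1 b \<and>
              (\<forall>g\<in>carrier G. c g mod int p = (c1 g + b g) mod int p))))"

end

(* A continuous 1-cocycle c of G with values in Z_p(theta)/p^k pulls back along the presentation
   to a crossed homomorphism modulo p^k on the free group F, twisted by theta.  Evaluating it on the
   relator r_0 with the commutator calculus gives a linear relation  sum_i alpha_i c(x_i) = 0 mod p^k
   whose coefficients alpha_i (the Fox derivatives of r_0 under theta) depend only on theta.  When
   (G, theta) is Kummerian, every homomorphism G -> F_p, in particular each dual of a generator,
   lifts to such a cocycle, so every alpha_i vanishes modulo every p^k.  The alpha_i of the pairs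
   [x_3, x_4] ... [x_(d-1), x_d] force theta(x_i) = 1 for i >= 3.  If theta(x_1) = 1, alpha_1 = 0
   is the equation (theta(x_2)^-1 - 1)^n = -q.  Otherwise alpha_2 = 0 forces theta(x_2) = 1, and
   then alpha_1 = 1 + theta(x_1) + ... + theta(x_1)^(q-1) = 0 contradicts the lifting-the-exponent
   lemma unless q = 0; this is where torsion-freeness is needed for p = 2. *)

theory Submission
  imports Defs "HOL-Number_Theory.Modular_Inverse"
begin

section \<open>\<open>p\<close>-adic integers as compatible residues\<close>

lemma Zp_range:
  assumes "a \<in> Zp p"
  shows "0 \<le> a k" "a k < int p ^ k"
  using assms by (auto simp: Zp_def)

lemma Zp_mod_power:
  assumes "a \<in> Zp p" "j \<le> k"
  shows "a k mod int p ^ j = a j"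
  using assms(2)
proof (induction k rule: dec_induct)
  case base
  then show ?case using Zp_range[OF assms(1), of j] by simp
next
  case (step k)
  have "a (Suc k) mod int p ^ j = a (Suc k) mod int p ^ k mod int p ^ j"
    using step.hyps by (simp add: mod_mod_cancel le_imp_power_dvd)
  also have "\<dots> = a j" using assms(1) step.IH by (simp add: Zp_def)
  finally show ?case .
qed

lemma Zp_cong_level:
  assumes "a \<in> Zp p" "j \<le> k"
  shows "[a k = a j] (mod int p ^ j)"
  using Zp_mod_power[OF assms] Zp_range[OF assms(1), of j] by (simp add: cong_def)

lemma Zp_level_eq_zp_one_iff:
  assumes "a \<in> Zp p"
  shows "a k = zp_one p k \<longleftrightarrow> [a k = 1] (mod int p ^ k)"
  using Zp_range[OF assms, of k] by (simp add: zp_one_def zp_of_int_def cong_def)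

lemma Zp_eq_zp_one_iff:
  assumes "a \<in> Zp p"
  shows "a = zp_one p \<longleftrightarrow> (\<forall>k. [a k = 1] (mod int p ^ k))"
  using Zp_level_eq_zp_one_iff[OF assms] by (auto simp: fun_eq_iff)

lemma Zp_level_cong_one:
  assumes "a \<in> Zp p" "a 1 = 1" "k \<ge> 1"
  shows "[a k = 1] (mod int p)"
  using Zp_cong_level[OF assms(1,3)] assms(2) by simp

lemma Zp_level_coprime:
  assumes "a \<in> Zp p" "a 1 = 1"
  shows "coprime (a k) (int p ^ k)"
proof (cases "k = 0")
  case False
  then have "[a k = 1] (mod int p)" using Zp_level_cong_one assms by simp
  then have "coprime (a k) (int p)" by (metis cong_imp_coprime cong_sym coprime_1_left)
  then show ?thesis by simp
qed simp

lemma zp_pow_level: "zp_pow p a m k = a k ^ m mod int p ^ k"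
  by (induction m) (simp_all add: zp_one_def zp_of_int_def zp_mult_def mod_mult_left_eq mod_mult_right_eq mult.commute)

lemma zp_inv_level:
  assumes u: "u \<in> Zp p" "u 1 = 1"
  shows "zp_inv p u k = modular_inverse (int p ^ k) (u k)"
proof -
  define w where "w k = modular_inverse (int p ^ k) (u k)" for k
  have "p > 0" using Zp_range[OF u(1), of 1] by simp
  then have pos: "int p ^ k > 0" for k by simp
  have w_inv: "[u k * w k = 1] (mod int p ^ k)" for k
    unfolding w_def by (rule cong_modular_inverse1) (rule Zp_level_coprime[OF u])
  have w_eqI: "w k = v" if "v \<in> {0..<int p ^ k}" "[u k * v = 1] (mod int p ^ k)" for k v
    unfolding w_def using that by (rule modular_inverse_int_eqI)
  have w_compat: "w (Suc k) mod int p ^ k = w k" for k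
  proof (rule sym, rule w_eqI)
    show "w (Suc k) mod int p ^ k \<in> {0..<int p ^ k}" using pos[of k] by simp
    have "[u k * (w (Suc k) mod int p ^ k) = u (Suc k) * w (Suc k)] (mod int p ^ k)"
      using Zp_cong_level[OF u(1), of k "Suc k"]
      by (intro cong_mult) (auto simp: cong_sym_eq cong_def)
    also have "[u (Suc k) * w (Suc k) = 1] (mod int p ^ k)"
      using w_inv[of "Suc k"] by (rule cong_dvd_modulus) (simp add: le_imp_power_dvd)
    finally show "[u k * (w (Suc k) mod int p ^ k) = 1] (mod int p ^ k)" .
  qed
  have wZ: "w \<in> Zp p"
    unfolding Zp_def w_def using pos w_compat[unfolded w_def]
    by (simp add: modular_inverse_int_nonneg modular_inverse_int_less)
  have "zp_mult p u b = zp_one p \<longleftrightarrow> b = w" if "b \<in> Zp p" for b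
  proof
    assume "zp_mult p u b = zp_one p"
    then have "[u k * b k = 1] (mod int p ^ k)" for k
      by (auto simp: zp_mult_def zp_one_def zp_of_int_def fun_eq_iff cong_def)
    then show "b = w" by (intro ext sym[OF w_eqI]) (use Zp_range[OF that] in auto)
  next
    assume "b = w"
    then show "zp_mult p u b = zp_one p"
      using w_inv by (simp add: zp_mult_def zp_one_def zp_of_int_def fun_eq_iff cong_def)
  qed
  then have "zp_inv p u = w" unfolding zp_inv_def using wZ by blast
  then show ?thesis by (simp add: w_def)
qed

lemma zp_pow_inv_minus_one_level:
  assumes "u \<in> Zp p" "u 1 = 1"
  shows "zp_pow p (zp_add p (zp_inv p u) (zp_neg p (zp_one p))) n k
           = (modular_inverse (int p ^ k) (u k) - 1) ^ n mod int p ^ k"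
  by (simp add: zp_pow_level zp_add_def zp_neg_def zp_one_def zp_of_int_def zp_inv_level[OF assms]
      mod_simps)

definition q_int :: "nat \<Rightarrow> enat \<Rightarrow> int" where
  "q_int p f = (case f of enat m \<Rightarrow> int p ^ m | \<infinity> \<Rightarrow> 0)"

lemma zp_neg_zp_q_level: "zp_neg p (zp_q p f) k = - q_int p f mod int p ^ k"
  by (cases f) (simp_all add: zp_neg_def zp_q_def zp_of_int_def q_int_def mod_simps)

lemma zp_neg_zp_q_in_Zp: "p > 0 \<Longrightarrow> zp_neg p (zp_q p f) \<in> Zp p"
  by (simp add: Zp_def zp_neg_zp_q_level mod_mod_cancel le_imp_power_dvd)

lemma Zp_neq_zp_one_not_dvd:
  assumes "a \<in> Zp p" "a \<noteq> zp_one p"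
  obtains k0 where "k0 \<ge> 1" "\<And>k. k \<ge> k0 \<Longrightarrow> \<not> int p ^ k0 dvd a k - 1"
proof -
  obtain k0 where k0: "\<not> [a k0 = 1] (mod int p ^ k0)"
    using Zp_eq_zp_one_iff[OF assms(1)] assms(2) by blast
  show ?thesis
  proof (rule that)
    show "k0 \<ge> 1" using k0 by (cases k0) auto
    show "\<not> int p ^ k0 dvd a k - 1" if "k \<ge> k0" for k
    proof
      assume "int p ^ k0 dvd a k - 1"
      then have "[a k = 1] (mod int p ^ k0)" by (simp add: cong_iff_dvd_diff)
      with k0 show False using cong_trans[OF cong_sym[OF Zp_cong_level[OF assms(1) that]]] by blast
    qed
  qed
qed

lemma zp_pow_inv_minus_one_vanishes_at_level:
  assumes u: "u \<in> Zp p" "u 1 = 1"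
  shows "zp_pow p (zp_add p (zp_inv p u) (zp_neg p (zp_one p))) n n = 0"
proof (cases "n = 0")
  case False
  define \<mu> where "\<mu> = modular_inverse (int p ^ n) (u n)"
  have "[u n * \<mu> = 1] (mod int p ^ n)"
    unfolding \<mu>_def by (rule cong_modular_inverse1) (rule Zp_level_coprime[OF u])
  then have inv: "[u n * \<mu> = 1] (mod int p)" by (rule cong_dvd_modulus) (use False in simp)
  have "[u n * \<mu> = 1 * \<mu>] (mod int p)"
    using Zp_level_cong_one[OF u] False by (intro cong_scalar_right) simp
  from cong_trans[OF cong_sym[OF this] inv] have "[\<mu> = 1] (mod int p)" by simp
  then have "int p ^ n dvd (\<mu> - 1) ^ n" by (simp add: cong_iff_dvd_diff dvd_power_same)
  then show ?thesis by (simp add: zp_pow_inv_minus_one_level[OF u] \<mu>_def)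
qed (simp add: zp_one_def zp_of_int_def)

lemma orientation_Zp: "orientation p G T \<theta> \<Longrightarrow> g \<in> carrier G \<Longrightarrow> \<theta> g \<in> Zp p"
  by (simp add: orientation_def)

lemma orientation_level_one: "orientation p G T \<theta> \<Longrightarrow> 1 < p \<Longrightarrow> g \<in> carrier G \<Longrightarrow> \<theta> g 1 = 1"
  by (simp add: orientation_def)

section \<open>Valuations of geometric sums and of linear forms\<close>

lemma one_plus_mult_power_cong:
  fixes P t :: int
  shows "[(1 + P * t) ^ i = 1 + int i * P * t] (mod P ^ 2)"
proof (induction i)
  case (Suc i)
  have "[(1 + P * t) ^ Suc i = (1 + int i * P * t) * (1 + P * t)] (mod P ^ 2)"
    using Suc by (simp add: cong_mult mult.commute)
  moreover have "(1 + int i * P * t) * (1 + P * t) = 1 + int (Suc i) * P * t + P ^ 2 * (int i * t * t)"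
    by (simp add: algebra_simps power2_eq_square)
  ultimately show ?case by (simp add: cong_def)
qed simp

lemma sum_powers_prime_cong:
  fixes a :: int
  assumes p: "Factorial_Ring.prime p" and a1: "[a = 1] (mod int p)" and a4: "p = 2 \<longrightarrow> [a = 1] (mod 4)"
  shows "[(\<Sum>i<p. a ^ i) = int p] (mod (int p)^2)"
proof (cases "p = 2")
  case True
  then have "(\<Sum>i<p. a ^ i) = 1 + a" by (simp add: numeral_2_eq_2)
  moreover have "[1 + a = 2] (mod 4)" using a4 True by (metis cong_add_lcancel one_add_one)
  ultimately show ?thesis using True by simp
next
  case False
  then have "odd p" using prime_odd_nat[OF p] prime_ge_2_nat[OF p] by simp
  then obtain e where e: "p = 2 * e + 1" by (rule oddE)
  have "[1 = a] (mod int p)" using a1 by (rule cong_sym)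
  then obtain t where t: "a = 1 + int p * t" by (auto simp: cong_iff_lin)
  have gauss: "2 * (\<Sum>i<n. int i) = int n * (int n - 1)" for n
    by (induction n) (simp_all add: algebra_simps)
  have "[(\<Sum>i<p. a ^ i) = (\<Sum>i<p. 1 + int i * int p * t)] (mod (int p)^2)"
    unfolding t by (intro cong_sum one_plus_mult_power_cong)
  also have "(\<Sum>i<p. 1 + int i * int p * t) = int p + int p * t * (\<Sum>i<p. int i)"
    by (simp add: sum.distrib sum_distrib_left algebra_simps)
  also have "(\<Sum>i<p. int i) = int p * int e"
    using gauss[of p] e by (simp add: algebra_simps)
  also have "int p + int p * t * (int p * int e) = int p + (int p)^2 * (t * int e)"
    by (simp add: algebra_simps power2_eq_square)
  also have "[\<dots> = int p] (mod (int p)^2)"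
    by (simp add: cong_def)
  finally show ?thesis .
qed

text \<open>Lifting the exponent: as \<open>a\<^sup>p - 1 = (a - 1) (1 + a + \<dots> + a\<^sup>p\<^sup>-\<^sup>1)\<close> and the sum is exactly divisible
  by \<open>p\<close>, raising \<open>a\<close> to the \<open>p\<close>-th power raises the valuation of \<open>a - 1\<close> by exactly one.\<close>
lemma prime_power_not_dvd_power_prime_minus_one:
  fixes a :: int
  assumes p: "Factorial_Ring.prime p" and a1: "[a = 1] (mod int p)" and a4: "p = 2 \<longrightarrow> [a = 1] (mod 4)"
    and nd: "\<not> int p ^ j dvd a - 1"
  shows "\<not> int p ^ Suc j dvd a ^ p - 1"
proof
  assume dvd: "int p ^ Suc j dvd a ^ p - 1"
  have "[int p = (\<Sum>i<p. a ^ i)] (mod (int p)^2)"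
    using sum_powers_prime_cong[OF p a1 a4] by (rule cong_sym)
  then obtain k where "(\<Sum>i<p. a ^ i) = int p + (int p)^2 * k" by (auto simp: cong_iff_lin)
  then have k: "(\<Sum>i<p. a ^ i) = int p * (1 + int p * k)" by (simp add: algebra_simps power2_eq_square)
  have "[1 = 1 + int p * k] (mod int p)" by (simp add: cong_iff_dvd_diff)
  then have "coprime (1 + int p * k) (int p)" by (rule cong_imp_coprime) simp
  then have cop: "coprime (int p ^ j) (1 + int p * k)" by (simp add: coprime_commute)
  have "a ^ p - 1 = int p * ((a - 1) * (1 + int p * k))"
    unfolding power_diff_1_eq k by (simp only: ac_simps)
  then have "int p ^ j dvd (a - 1) * (1 + int p * k)"
    using dvd prime_gt_0_nat[OF p] by simp
  then show False using nd cop by (simp add: coprime_dvd_mult_left_iff)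
qed

lemma prime_power_not_dvd_power_prime_power_minus_one:
  fixes a :: int
  assumes p: "Factorial_Ring.prime p" and a1: "[a = 1] (mod int p)" and a4: "p = 2 \<longrightarrow> [a = 1] (mod 4)"
    and nd: "\<not> int p ^ j dvd a - 1"
  shows "\<not> int p ^ (j + m) dvd a ^ p ^ m - 1"
proof (induction m)
  case (Suc m)
  have "[a ^ p ^ m = 1] (mod int p)" using cong_pow[OF a1, of "p ^ m"] by simp
  moreover have "p = 2 \<longrightarrow> [a ^ p ^ m = 1] (mod 4)" using cong_pow[of a 1 4 "p ^ m"] a4 by auto
  ultimately have "\<not> int p ^ Suc (j + m) dvd (a ^ p ^ m) ^ p - 1"
    using Suc.IH by (rule prime_power_not_dvd_power_prime_minus_one[OF p])
  then show ?case by (simp add: power_mult[symmetric] mult.commute)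
qed (use nd in simp)

text \<open>Induction on the exponent: once all \<open>\<alpha>\<^sub>j\<close> are divisible by \<open>P\<^sup>w\<close>, the lift \<open>c\<close> of the
  \<open>i\<^sub>0\<close>-th unit vector differs from it by a multiple of \<open>P\<close>, so \<open>\<alpha>\<^sub>i\<^sub>0\<close> is divisible by \<open>P\<^sup>w\<^sup>+\<^sup>1\<close>.\<close>
lemma power_dvd_coefficients_of_basis_lifts:
  fixes \<alpha> :: "'i \<Rightarrow> int" and P :: int
  assumes I: "finite I"
    and lift: "\<And>i0. i0 \<in> I \<Longrightarrow> \<exists>c. (\<forall>i\<in>I. [c i = (if i = i0 then 1 else 0)] (mod P))
                                  \<and> [(\<Sum>i\<in>I. \<alpha> i * c i) = 0] (mod P ^ k)"
    and i: "i \<in> I"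
  shows "P ^ k dvd \<alpha> i"
proof -
  have "\<forall>i\<in>I. P ^ w dvd \<alpha> i" if "w \<le> k" for w
    using that
  proof (induction w)
    case (Suc w)
    show ?case
    proof
      fix i0 assume i0: "i0 \<in> I"
      obtain c where c1: "\<forall>i\<in>I. [c i = (if i = i0 then 1 else 0)] (mod P)"
        and c2: "[(\<Sum>i\<in>I. \<alpha> i * c i) = 0] (mod P ^ k)" using lift[OF i0] by blast
      have IH: "\<forall>i\<in>I. P ^ w dvd \<alpha> i" using Suc by simp
      have "P ^ w * P dvd \<alpha> i * (c i - (if i = i0 then 1 else 0))" if "i \<in> I" for i
        using IH c1 that by (intro mult_dvd_mono) (simp_all add: cong_iff_dvd_diff)
      then have "P ^ Suc w dvd (\<Sum>i\<in>I. \<alpha> i * (c i - (if i = i0 then 1 else 0)))"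
        by (simp add: dvd_sum mult.commute)
      also have "(\<Sum>i\<in>I. \<alpha> i * (c i - (if i = i0 then 1 else 0)))
          = (\<Sum>i\<in>I. \<alpha> i * c i) - (\<Sum>i\<in>I. \<alpha> i * (if i = i0 then 1 else 0))"
        by (simp add: sum_subtractf right_diff_distrib)
      finally have d1: "P ^ Suc w dvd (\<Sum>i\<in>I. \<alpha> i * c i) - (\<Sum>i\<in>I. \<alpha> i * (if i = i0 then 1 else 0))" .
      have d2: "P ^ Suc w dvd (\<Sum>i\<in>I. \<alpha> i * c i)"
        using c2 Suc.prems by (meson cong_0_iff dvd_trans le_imp_power_dvd)
      have "(\<Sum>i\<in>I. \<alpha> i * (if i = i0 then 1 else 0)) = \<alpha> i0"
        using I i0 by (simp add: if_distrib sum.delta cong: if_cong)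
      then show "P ^ Suc w dvd \<alpha> i0" using dvd_diff[OF d2 d1] by simp
    qed
  qed simp
  then show ?thesis using i by blast
qed

lemma prime_power_dvd_of_dvd_power_mult:
  fixes a b :: int
  assumes p: "Factorial_Ring.prime p" and e: "e \<ge> 1"
    and dvd: "int p ^ (k + e * j) dvd a ^ e * b" and nd: "\<not> int p ^ k dvd b"
  shows "int p ^ j dvd a"
proof (cases "a = 0")
  case False
  have pi: "Factorial_Ring.prime (int p)" using p by simp
  then have nu: "\<not> is_unit (int p)" using not_prime_unit by blast
  have b0: "b \<noteq> 0" using nd by auto
  have "k + e * j \<le> Factorial_Ring.multiplicity (int p) (a ^ e * b)"
    using dvd power_dvd_iff_le_multiplicity[OF _ nu] False b0 by simp
  also have "\<dots> = e * Factorial_Ring.multiplicity (int p) a + Factorial_Ring.multiplicity (int p) b"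
    using pi False b0 by (simp add: prime_elem_multiplicity_mult_distrib prime_elem_multiplicity_power_distrib)
  finally have "e * j < e * Factorial_Ring.multiplicity (int p) a"
    using nd power_dvd_iff_le_multiplicity[OF b0 nu, of k] by linarith
  then have "j \<le> Factorial_Ring.multiplicity (int p) a" by (simp add: mult_less_cancel1 less_imp_le)
  then show ?thesis using power_dvd_iff_le_multiplicity[OF False nu] by simp
qed simp

section \<open>Commutator calculus for crossed homomorphisms modulo \<open>M\<close>\<close>

lemma (in group) comm_closed [simp]:
  "a \<in> carrier G \<Longrightarrow> b \<in> carrier G \<Longrightarrow> comm G a b \<in> carrier G"
  by (simp add: comm_def)

lemma (in group) lcomm_closed [simp]:
  "a \<in> carrier G \<Longrightarrow> b \<in> carrier G \<Longrightarrow> lcomm G a b k \<in> carrier G"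
  by (induction k) simp_all

lemma (in group) qpow_closed [simp]: "a \<in> carrier G \<Longrightarrow> qpow G p f a \<in> carrier G"
  by (cases f) (simp_all add: qpow_def)

lemma comm_prod_in_subgroup:
  assumes "subgroup K G" "\<And>j. j < m \<Longrightarrow> comm G (x (2 * j + 3)) (x (2 * j + 4)) \<in> K"
  shows "comm_prod G x m \<in> K"
  using assms(2) by (induction m) (simp_all add: subgroup.one_closed[OF assms(1)] subgroup.m_closed[OF assms(1)])

definition q_geom_sum :: "nat \<Rightarrow> enat \<Rightarrow> int \<Rightarrow> int" where
  "q_geom_sum p f u = (case f of enat m \<Rightarrow> \<Sum>i<p ^ m. u ^ i | \<infinity> \<Rightarrow> 0)"

text \<open>The Fox derivative of the relator \<open>x\<^sub>1\<^sup>q [x\<^sub>1, x\<^sub>2, \<dots>, x\<^sub>2] [x\<^sub>3, x\<^sub>4] \<cdots>\<close> with respect to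
  \<open>x\<^sub>i\<close>, evaluated modulo \<open>M\<close> at a character with values \<open>u\<^sub>i\<close> on the generators
  (\<open>\<mu>\<^sub>i\<close> being the inverse of \<open>u\<^sub>i\<close> modulo \<open>M\<close>).\<close>
definition relator_coeff :: "int \<Rightarrow> nat \<Rightarrow> enat \<Rightarrow> nat \<Rightarrow> (nat \<Rightarrow> int) \<Rightarrow> nat \<Rightarrow> int" where
  "relator_coeff M p f n u i =
     (let \<mu> = (\<lambda>j. modular_inverse M (u j)) in
      if i = 1 then q_geom_sum p f (u 1) + \<mu> 1 * (\<mu> 2 - 1) ^ n
      else if i = 2 then \<mu> 1 * \<mu> 2 * (u 1 - 1) * (\<mu> 2 - 1) ^ (n - 1)
      else if odd i then - (\<mu> i * \<mu> (i + 1) * (u (i + 1) - 1))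
      else \<mu> (i - 1) * \<mu> i * (u (i - 1) - 1))"

lemma relator_coeff_simps:
  fixes M :: int and u :: "nat \<Rightarrow> int"
  defines "\<mu> \<equiv> \<lambda>j. modular_inverse M (u j)"
  shows "relator_coeff M p f n u 1 = q_geom_sum p f (u 1) + \<mu> 1 * (\<mu> 2 - 1) ^ n"
    and "relator_coeff M p f n u 2 = \<mu> 1 * \<mu> 2 * (u 1 - 1) * (\<mu> 2 - 1) ^ (n - 1)"
    and "relator_coeff M p f n u (2 * j + 3) = - (\<mu> (2 * j + 3) * \<mu> (2 * j + 4) * (u (2 * j + 4) - 1))"
    and "relator_coeff M p f n u (2 * j + 4) = \<mu> (2 * j + 3) * \<mu> (2 * j + 4) * (u (2 * j + 3) - 1)"
  unfolding relator_coeff_def \<mu>_def Let_def by (simp_all add: ac_simps)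

lemma q_geom_sum_one: "q_geom_sum p f 1 = q_int p f"
  by (cases f) (simp_all add: q_geom_sum_def q_int_def)

lemma sum_atLeastAtMost_pairs:
  fixes g :: "nat \<Rightarrow> int"
  shows "(\<Sum>i\<in>{1..2 * m + 2}. g i) = g 1 + g 2 + (\<Sum>j<m. g (2 * j + 3) + g (2 * j + 4))"
proof (induction m)
  case 0
  have "{1..2 * 0 + 2} = {1, 2 :: nat}" by auto
  then show ?case by simp
next
  case (Suc m)
  have "{1..2 * Suc m + 2} = insert (2 * m + 4) (insert (2 * m + 3) {1..2 * m + 2})" by auto
  then show ?case using Suc by simp
qed

text \<open>A character \<open>t\<close> of \<open>F\<close> with values in \<open>(\<int>/M)\<^sup>\<times>\<close> and a crossed homomorphism \<open>c\<close>
  from \<open>F\<close> to \<open>\<int>/M\<close> twisted by \<open>t\<close>, both given by integer representatives.\<close>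
locale crossed_hom_mod = group F for F :: "('a, 'b) monoid_scheme" (structure) +
  fixes t c :: "'a \<Rightarrow> int" and M :: int
  assumes t_coprime: "a \<in> carrier F \<Longrightarrow> coprime (t a) M"
    and t_mult: "a \<in> carrier F \<Longrightarrow> b \<in> carrier F \<Longrightarrow> [t (a \<otimes> b) = t a * t b] (mod M)"
    and c_mult: "a \<in> carrier F \<Longrightarrow> b \<in> carrier F \<Longrightarrow> [c (a \<otimes> b) = c a + t a * c b] (mod M)"
begin

abbreviation t_inv :: "'a \<Rightarrow> int" where
  "t_inv a \<equiv> modular_inverse M (t a)"

lemma t_mult_t_inv: "a \<in> carrier F \<Longrightarrow> [t a * t_inv a = 1] (mod M)"
  by (rule cong_modular_inverse1) (rule t_coprime)

lemma t_one: "[t \<one> = 1] (mod M)"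
proof -
  have "[t \<one> * t \<one> = t \<one> * 1] (mod M)" using cong_sym[OF t_mult[of \<one> \<one>]] by simp
  then show ?thesis using t_coprime[OF one_closed] cong_mult_lcancel by blast
qed

lemma c_one: "[c \<one> = 0] (mod M)"
proof -
  have "[t \<one> * c \<one> = t \<one> * 0] (mod M)"
    using c_mult[of \<one> \<one>] by (simp add: cong_iff_dvd_diff)
  then show ?thesis using t_coprime[OF one_closed] cong_mult_lcancel by blast
qed

lemma t_mult_unipotent:
  assumes "a \<in> carrier F" "b \<in> carrier F" "[t b = 1] (mod M)"
  shows "[t (a \<otimes> b) = t a] (mod M)"
  using cong_trans[OF t_mult[OF assms(1,2)] cong_scalar_left[OF assms(3)]] by simp

lemma c_mult_unipotent:
  assumes "a \<in> carrier F" "b \<in> carrier F" "[t a = 1] (mod M)"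
  shows "[c (a \<otimes> b) = c a + c b] (mod M)"
  using cong_trans[OF c_mult[OF assms(1,2)] cong_add[OF cong_refl cong_scalar_right[OF assms(3)]]]
  by simp

lemma comm_cancel: "a \<in> carrier F \<Longrightarrow> b \<in> carrier F \<Longrightarrow> b \<otimes> a \<otimes> comm F a b = a \<otimes> b"
  by (simp add: comm_def m_assoc[symmetric]) (simp add: m_assoc)

lemma t_comm: 
  assumes a: "a \<in> carrier F" and b: "b \<in> carrier F"
  shows "[t (comm F a b) = 1] (mod M)"
proof -
  have "[t a * t b * t (comm F a b) = t (b \<otimes> a) * t (comm F a b)] (mod M)"
    using cong_scalar_right[OF cong_sym[OF t_mult[OF b a]], of "t (comm F a b)"]
    by (simp only: mult.commute[of "t b" "t a"])
  also have "[t (b \<otimes> a) * t (comm F a b) = t (a \<otimes> b)] (mod M)"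
    using cong_sym[OF t_mult[of "b \<otimes> a" "comm F a b"]] a b by (simp add: comm_cancel)
  also have "[t (a \<otimes> b) = t a * t b * 1] (mod M)" using t_mult[OF a b] by simp
  finally have "[t a * t b * t (comm F a b) = t a * t b * 1] (mod M)" .
  moreover have "coprime (t a * t b) M" using t_coprime a b by simp
  ultimately show ?thesis using cong_mult_lcancel by blast
qed

lemma c_comm:
  assumes a: "a \<in> carrier F" and b: "b \<in> carrier F"
  shows "[c (comm F a b) = t_inv a * t_inv b * ((t a - 1) * c b - (t b - 1) * c a)] (mod M)"
proof -
  have k: "comm F a b \<in> carrier F" using a b by simp
  have "[c a + t a * c b = c (a \<otimes> b)] (mod M)" using c_mult[OF a b] by (rule cong_sym)
  also have "c (a \<otimes> b) = c (b \<otimes> a \<otimes> comm F a b)" using a b by (simp add: comm_cancel)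
  also have "[c (b \<otimes> a \<otimes> comm F a b) = c (b \<otimes> a) + t (b \<otimes> a) * c (comm F a b)] (mod M)"
    using a b k by (intro c_mult) auto
  also have "[c (b \<otimes> a) + t (b \<otimes> a) * c (comm F a b) = (c b + t b * c a) + t b * t a * c (comm F a b)] (mod M)"
    using c_mult[OF b a] t_mult[OF b a] by (intro cong_add cong_mult cong_refl)
  finally have comm_eq: "[c a + t a * c b - (c b + t b * c a) = t b * t a * c (comm F a b)] (mod M)"
    by (simp add: cong_iff_dvd_diff algebra_simps)
  have "t_inv a * t_inv b * ((t a - 1) * c b - (t b - 1) * c a)
      = t_inv a * t_inv b * (c a + t a * c b - (c b + t b * c a))"
    by (simp add: algebra_simps)
  also have "[\<dots> = t_inv a * t_inv b * (t b * t a * c (comm F a b))] (mod M)"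
    using comm_eq by (rule cong_scalar_left)
  also have "t_inv a * t_inv b * (t b * t a * c (comm F a b))
      = (t a * t_inv a) * (t b * t_inv b) * c (comm F a b)"
    by (simp add: ac_simps)
  also have "[(t a * t_inv a) * (t b * t_inv b) * c (comm F a b) = 1 * 1 * c (comm F a b)] (mod M)"
    using t_mult_t_inv a b by (intro cong_mult cong_refl)
  finally have "[t_inv a * t_inv b * ((t a - 1) * c b - (t b - 1) * c a) = c (comm F a b)] (mod M)"
    by simp
  then show ?thesis by (rule cong_sym)
qed

lemma t_inv_unipotent:
  assumes "a \<in> carrier F" "[t a = 1] (mod M)"
  shows "[t_inv a = 1] (mod M)"
proof -
  have "[1 * t_inv a = t a * t_inv a] (mod M)" using assms(2) by (rule cong_scalar_right[OF cong_sym])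
  then show ?thesis using cong_trans[OF _ t_mult_t_inv[OF assms(1)]] by simp
qed

lemma c_comm_unipotent:
  assumes a: "a \<in> carrier F" and b: "b \<in> carrier F" and ta: "[t a = 1] (mod M)"
  shows "[c (comm F a b) = (t_inv b - 1) * c a] (mod M)"
proof -
  have "[t_inv a * t_inv b * ((t a - 1) * c b - (t b - 1) * c a)
      = 1 * t_inv b * ((1 - 1) * c b - (t b - 1) * c a)] (mod M)"
    using t_inv_unipotent[OF a ta] ta by (intro cong_mult cong_diff cong_refl)
  also have "1 * t_inv b * ((1 - 1) * c b - (t b - 1) * c a)
      = (t_inv b - 1) * c a - (t b * t_inv b - 1) * c a"
    by (simp add: algebra_simps)
  also have "[\<dots> = (t_inv b - 1) * c a - 0 * c a] (mod M)"
    using t_mult_t_inv[OF b] by (intro cong_diff cong_mult cong_refl) (simp add: cong_iff_dvd_diff)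
  finally have "[t_inv a * t_inv b * ((t a - 1) * c b - (t b - 1) * c a) = (t_inv b - 1) * c a] (mod M)"
    by simp
  with c_comm[OF a b] show ?thesis by (rule cong_trans)
qed

lemma c_comm_unipotents:
  assumes "a \<in> carrier F" "b \<in> carrier F" "[t a = 1] (mod M)" "[t b = 1] (mod M)"
  shows "[c (comm F a b) = 0] (mod M)"
proof -
  have "[(t_inv b - 1) * c a = (1 - 1) * c a] (mod M)"
    using t_inv_unipotent[OF assms(2,4)] by (intro cong_mult cong_diff cong_refl)
  then show ?thesis using cong_trans[OF c_comm_unipotent[OF assms(1-3)]] by simp
qed

lemma t_pow: "a \<in> carrier F \<Longrightarrow> [t (a [^] (N :: nat)) = t a ^ N] (mod M)"
proof (induction N)
  case (Suc N)
  have "[t (a [^] N \<otimes> a) = t (a [^] N) * t a] (mod M)" using Suc.prems by (simp add: t_mult)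
  also have "[t (a [^] N) * t a = t a ^ N * t a] (mod M)" using Suc by (simp add: cong_scalar_right)
  finally show ?case by (simp add: mult.commute)
qed (simp add: t_one)

lemma c_pow: "a \<in> carrier F \<Longrightarrow> [c (a [^] (N :: nat)) = c a * (\<Sum>i<N. t a ^ i)] (mod M)"
proof (induction N)
  case (Suc N)
  have "[c (a [^] N \<otimes> a) = c (a [^] N) + t (a [^] N) * c a] (mod M)" using Suc.prems by (simp add: c_mult)
  also have "[c (a [^] N) + t (a [^] N) * c a = c a * (\<Sum>i<N. t a ^ i) + t a ^ N * c a] (mod M)"
    using Suc t_pow by (intro cong_add cong_mult cong_refl) auto
  finally show ?case by (simp add: algebra_simps)
qed (simp add: c_one)

lemma c_qpow: "a \<in> carrier F \<Longrightarrow> [c (qpow F p f a) = c a * q_geom_sum p f (t a)] (mod M)"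
  by (cases f) (simp_all add: qpow_def q_geom_sum_def c_pow c_one)

lemma t_lcomm: "a \<in> carrier F \<Longrightarrow> b \<in> carrier F \<Longrightarrow> [t (lcomm F a b (Suc k)) = 1] (mod M)"
  by (simp add: t_comm)

lemma c_lcomm:
  assumes a: "a \<in> carrier F" and b: "b \<in> carrier F"
  shows "[c (lcomm F a b (Suc k)) = (t_inv b - 1) ^ k * c (comm F a b)] (mod M)"
proof (induction k)
  case (Suc k)
  have "[c (lcomm F a b (Suc (Suc k))) = (t_inv b - 1) * c (lcomm F a b (Suc k))] (mod M)"
    using c_comm_unipotent[OF _ b t_lcomm[OF a b]] a b by simp
  also have "[(t_inv b - 1) * c (lcomm F a b (Suc k))
      = (t_inv b - 1) * ((t_inv b - 1) ^ k * c (comm F a b))] (mod M)"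
    using Suc by (rule cong_scalar_left)
  finally show ?case by (simp add: ac_simps)
qed simp

lemma comm_prod_cong:
  assumes x: "\<And>j. j < m \<Longrightarrow> x (2 * j + 3) \<in> carrier F \<and> x (2 * j + 4) \<in> carrier F"
  shows "[t (comm_prod F x m) = 1] (mod M)
     \<and> [c (comm_prod F x m) = (\<Sum>j<m. c (comm F (x (2 * j + 3)) (x (2 * j + 4))))] (mod M)"
  using x
proof (induction m)
  case (Suc m)
  define P K where "P = comm_prod F x m" and "K = comm F (x (2 * m + 3)) (x (2 * m + 4))"
  have P: "P \<in> carrier F" unfolding P_def using Suc.prems
    by (intro comm_prod_in_subgroup[OF subgroup_self]) simp_all
  have K: "K \<in> carrier F" "[t K = 1] (mod M)" unfolding K_def using Suc.prems t_comm by simp_all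
  have IH: "[t P = 1] (mod M)" "[c P = (\<Sum>j<m. c (comm F (x (2 * j + 3)) (x (2 * j + 4))))] (mod M)"
    using Suc unfolding P_def by simp_all
  have "[t (P \<otimes> K) = 1] (mod M)" using t_mult_unipotent[OF P K] IH(1) by (rule cong_trans)
  moreover have "[c (P \<otimes> K) = (\<Sum>j<m. c (comm F (x (2 * j + 3)) (x (2 * j + 4)))) + c K] (mod M)"
    using cong_trans[OF c_mult_unipotent[OF P K(1) IH(1)] cong_add[OF IH(2) cong_refl]] .
  ultimately show ?case by (simp add: P_def K_def)
qed (simp add: t_one c_one)

lemma c_relator_split:
  assumes A: "A \<in> carrier F" and L: "L \<in> carrier F" "[t L = 1] (mod M)"
    and P: "P \<in> carrier F" "[t P = 1] (mod M)" and s: "s \<in> carrier F" "[t s = 1] (mod M)" "[c s = 0] (mod M)"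
    and r: "[t (A \<otimes> L \<otimes> P \<otimes> s) = 1] (mod M)" "[c (A \<otimes> L \<otimes> P \<otimes> s) = 0] (mod M)"
  shows "[c A + c L + c P = 0] (mod M)"
proof -
  have "[t (A \<otimes> L \<otimes> P \<otimes> s) = t (A \<otimes> L \<otimes> P)] (mod M)" using A L P s by (intro t_mult_unipotent) auto
  also have "[t (A \<otimes> L \<otimes> P) = t (A \<otimes> L)] (mod M)" using A L P by (intro t_mult_unipotent) auto
  also have "[t (A \<otimes> L) = t A] (mod M)" using A L by (intro t_mult_unipotent) auto
  finally have "[t (A \<otimes> L \<otimes> P \<otimes> s) = t A] (mod M)" .
  then have tA: "[t A = 1] (mod M)" using cong_trans[OF cong_sym r(1)] by blast
  then have tAL: "[t (A \<otimes> L) = 1] (mod M)" by (rule cong_trans[OF t_mult_unipotent[OF A L]])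
  then have tALP: "[t (A \<otimes> L \<otimes> P) = 1] (mod M)"
    by (rule cong_trans[OF t_mult_unipotent[OF m_closed[OF A L(1)] P]])
  have "[c (A \<otimes> L \<otimes> P \<otimes> s) = c (A \<otimes> L \<otimes> P) + c s] (mod M)"
    using c_mult_unipotent[OF _ s(1) tALP] A L P by simp
  also have "[c (A \<otimes> L \<otimes> P) + c s = (c (A \<otimes> L) + c P) + 0] (mod M)"
    using c_mult_unipotent[OF _ P(1) tAL] A L s(3) by (intro cong_add) simp_all
  also have "[(c (A \<otimes> L) + c P) + 0 = c A + c L + c P] (mod M)"
    using c_mult_unipotent[OF A L(1) tA] by (simp add: cong_add)
  finally have "[c (A \<otimes> L \<otimes> P \<otimes> s) = c A + c L + c P] (mod M)" .
  then show ?thesis using cong_trans[OF cong_sym r(2)] by blast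
qed

lemma c_relator_head:
  assumes x: "x 1 \<in> carrier F" "x 2 \<in> carrier F" and n: "n = Suc n'"
  shows "[relator_coeff M p f n (\<lambda>i. t (x i)) 1 * c (x 1) + relator_coeff M p f n (\<lambda>i. t (x i)) 2 * c (x 2)
           = c (qpow F p f (x 1)) + c (lcomm F (x 1) (x 2) n)] (mod M)"
proof -
  define \<mu>1 \<mu>2 w where "\<mu>1 = t_inv (x 1)" and "\<mu>2 = t_inv (x 2)" and "w = (\<mu>2 - 1) ^ n'"
  define E where "E = c (x 1) * q_geom_sum p f (t (x 1))
    + w * (\<mu>1 * \<mu>2 * ((t (x 1) - 1) * c (x 2) - (t (x 2) - 1) * c (x 1)))"
  have "relator_coeff M p f n (\<lambda>i. t (x i)) 1 * c (x 1) + relator_coeff M p f n (\<lambda>i. t (x i)) 2 * c (x 2)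
      = E + \<mu>1 * w * c (x 1) * (t (x 2) * \<mu>2 - 1)"
    unfolding E_def relator_coeff_simps n \<mu>1_def[symmetric] \<mu>2_def[symmetric] w_def[symmetric]
    by (simp add: w_def algebra_simps)
  also have "[E + \<mu>1 * w * c (x 1) * (t (x 2) * \<mu>2 - 1) = E + 0] (mod M)"
    using t_mult_t_inv[OF x(2)] unfolding \<mu>2_def by (intro cong_add cong_refl) (simp add: cong_iff_dvd_diff)
  also have "[E + 0 = c (qpow F p f (x 1)) + c (lcomm F (x 1) (x 2) n)] (mod M)"
  proof -
    have "[c (lcomm F (x 1) (x 2) n) = w * (\<mu>1 * \<mu>2 * ((t (x 1) - 1) * c (x 2) - (t (x 2) - 1) * c (x 1)))] (mod M)"
      using c_lcomm[OF x] unfolding n w_def \<mu>1_def \<mu>2_def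
      by (rule cong_trans) (intro cong_scalar_left c_comm x)
    then have "[c (qpow F p f (x 1)) + c (lcomm F (x 1) (x 2) n) = E] (mod M)"
      unfolding E_def by (rule cong_add[OF c_qpow[OF x(1)]])
    from cong_sym[OF this] show ?thesis by simp
  qed
  finally show ?thesis .
qed

lemma c_relator_pairs:
  assumes x: "\<And>j. j < m \<Longrightarrow> x (2 * j + 3) \<in> carrier F \<and> x (2 * j + 4) \<in> carrier F"
  shows "[(\<Sum>j<m. relator_coeff M p f n (\<lambda>i. t (x i)) (2 * j + 3) * c (x (2 * j + 3))
                + relator_coeff M p f n (\<lambda>i. t (x i)) (2 * j + 4) * c (x (2 * j + 4)))
           = c (comm_prod F x m)] (mod M)"
proof -
  have "[(\<Sum>j<m. relator_coeff M p f n (\<lambda>i. t (x i)) (2 * j + 3) * c (x (2 * j + 3))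
                + relator_coeff M p f n (\<lambda>i. t (x i)) (2 * j + 4) * c (x (2 * j + 4)))
      = (\<Sum>j<m. c (comm F (x (2 * j + 3)) (x (2 * j + 4))))] (mod M)"
  proof (rule cong_sum)
    fix j assume "j \<in> {..<m}"
    then have xj: "x (2 * j + 3) \<in> carrier F" "x (2 * j + 4) \<in> carrier F" using x by auto
    have "relator_coeff M p f n (\<lambda>i. t (x i)) (2 * j + 3) * c (x (2 * j + 3))
          + relator_coeff M p f n (\<lambda>i. t (x i)) (2 * j + 4) * c (x (2 * j + 4))
        = t_inv (x (2 * j + 3)) * t_inv (x (2 * j + 4))
          * ((t (x (2 * j + 3)) - 1) * c (x (2 * j + 4)) - (t (x (2 * j + 4)) - 1) * c (x (2 * j + 3)))"
      unfolding relator_coeff_simps by (simp add: algebra_simps)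
    also have "[\<dots> = c (comm F (x (2 * j + 3)) (x (2 * j + 4)))] (mod M)"
      using c_comm[OF xj] by (rule cong_sym)
    finally show "[relator_coeff M p f n (\<lambda>i. t (x i)) (2 * j + 3) * c (x (2 * j + 3))
          + relator_coeff M p f n (\<lambda>i. t (x i)) (2 * j + 4) * c (x (2 * j + 4))
        = c (comm F (x (2 * j + 3)) (x (2 * j + 4)))] (mod M)" .
  qed
  also have "[(\<Sum>j<m. c (comm F (x (2 * j + 3)) (x (2 * j + 4)))) = c (comm_prod F x m)] (mod M)"
    using cong_sym[OF conjunct2[OF comm_prod_cong[OF x]]] .
  finally show ?thesis .
qed

lemma c_relator:
  assumes x: "\<And>i. i \<in> {1..2 * m + 2} \<Longrightarrow> x i \<in> carrier F" and n: "n \<ge> 1"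
    and s: "s \<in> carrier F" "[t s = 1] (mod M)" "[c s = 0] (mod M)"
    and r: "r = qpow F p f (x 1) \<otimes> lcomm F (x 1) (x 2) n \<otimes> comm_prod F x m \<otimes> s"
      "[t r = 1] (mod M)" "[c r = 0] (mod M)"
  shows "[(\<Sum>i\<in>{1..2 * m + 2}. relator_coeff M p f n (\<lambda>i. t (x i)) i * c (x i)) = 0] (mod M)"
proof -
  obtain n' where n': "n = Suc n'" using n by (cases n) auto
  have x12: "x 1 \<in> carrier F" "x 2 \<in> carrier F" using x by auto
  have xj: "\<And>j. j < m \<Longrightarrow> x (2 * j + 3) \<in> carrier F \<and> x (2 * j + 4) \<in> carrier F" using x by auto
  have P: "comm_prod F x m \<in> carrier F" "[t (comm_prod F x m) = 1] (mod M)"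
    using comm_prod_cong[OF xj] xj by (auto intro!: comm_prod_in_subgroup[OF subgroup_self])
  have "[(\<Sum>i\<in>{1..2 * m + 2}. relator_coeff M p f n (\<lambda>i. t (x i)) i * c (x i))
      = c (qpow F p f (x 1)) + c (lcomm F (x 1) (x 2) n) + c (comm_prod F x m)] (mod M)"
    using cong_add[OF c_relator_head[OF x12 n'] c_relator_pairs[OF xj]]
      sum_atLeastAtMost_pairs[of "\<lambda>i. relator_coeff M p f n (\<lambda>i. t (x i)) i * c (x i)" m]
    by simp
  moreover have "[c (qpow F p f (x 1)) + c (lcomm F (x 1) (x 2) n) + c (comm_prod F x m) = 0] (mod M)"
  proof (rule c_relator_split[OF _ _ _ P s])
    show "qpow F p f (x 1) \<in> carrier F" "lcomm F (x 1) (x 2) n \<in> carrier F" using x12 by simp_all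
    show "[t (lcomm F (x 1) (x 2) n) = 1] (mod M)" using t_lcomm[OF x12, of n'] n' by simp
    show "[t (qpow F p f (x 1) \<otimes> lcomm F (x 1) (x 2) n \<otimes> comm_prod F x m \<otimes> s) = 1] (mod M)"
      "[c (qpow F p f (x 1) \<otimes> lcomm F (x 1) (x 2) n \<otimes> comm_prod F x m \<otimes> s) = 0] (mod M)"
      using r by simp_all
  qed
  ultimately show ?thesis by (rule cong_trans)
qed

end

section \<open>Closed subgroups and continuous homomorphisms to \<open>\<int>/p\<close>\<close>

lemma closedin_of_open_fibres:
  assumes "\<And>v. openin T {x \<in> topspace T. f x = v}"
  shows "closedin T {x \<in> topspace T. P (f x)}"
proof -
  have "topspace T - {x \<in> topspace T. P (f x)} = (\<Union>v\<in>{v. \<not> P v}. {x \<in> topspace T. f x = v})"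
    by auto
  moreover have "openin T (\<Union>v\<in>{v. \<not> P v}. {x \<in> topspace T. f x = v})"
    using assms by blast
  ultimately show ?thesis unfolding closedin_def by auto
qed

lemma closed_gen_subset:
  assumes "group G" "subgroup K G" "closedin T K" "A \<subseteq> K"
  shows "closed_gen G T A \<subseteq> K"
  unfolding closed_gen_def
  using group.generate_subgroup_incl[OF assms(1,4,2)] assms(3) by (rule closure_of_minimal)

lemma closed_derived_subset:
  assumes "group G" "subgroup K G" "closedin T K" "\<And>a b. a \<in> S \<Longrightarrow> b \<in> S \<Longrightarrow> comm G a b \<in> K"
  shows "closed_derived G T S \<subseteq> K"
  unfolding closed_derived_def using assms by (intro closed_gen_subset) auto

lemma closed_normal_gen_subset:
  assumes "group G" "K \<lhd> G" "closedin T K" "A \<subseteq> K"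
  shows "closed_normal_gen G T A \<subseteq> K"
  unfolding closed_normal_gen_def using assms
  by (intro closed_gen_subset) (auto intro: normal.inv_op_closed1 normal_imp_subgroup)

lemma closed_gen_subset_topspace: "closed_gen G T A \<subseteq> topspace T"
  by (simp add: closed_gen_def closure_of_subset_topspace)

lemma closed_derived_subset_topspace: "closed_derived G T A \<subseteq> topspace T"
  by (simp add: closed_derived_def closed_gen_subset_topspace)

context crossed_hom_mod
begin

lemma unipotent_subgroup: "subgroup {a \<in> carrier F. [t a = 1] (mod M)} F"
proof (rule subgroupI)
  fix a assume "a \<in> {a \<in> carrier F. [t a = 1] (mod M)}"
  then have a: "a \<in> carrier F" "[t a = 1] (mod M)" by auto
  have "[t (inv a \<otimes> a) = t (inv a)] (mod M)" using t_mult_unipotent[OF inv_closed[OF a(1)] a] .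
  then have "[t \<one> = t (inv a)] (mod M)" using a(1) by simp
  from cong_trans[OF cong_sym[OF this] t_one] have "[t (inv a) = 1] (mod M)" .
  then show "inv a \<in> {a \<in> carrier F. [t a = 1] (mod M)}" using a by simp
next
  fix a b assume "a \<in> {a \<in> carrier F. [t a = 1] (mod M)}" "b \<in> {a \<in> carrier F. [t a = 1] (mod M)}"
  then have a: "a \<in> carrier F" "[t a = 1] (mod M)" and b: "b \<in> carrier F" "[t b = 1] (mod M)" by auto
  have "[t (a \<otimes> b) = 1] (mod M)" using cong_trans[OF t_mult_unipotent[OF a(1) b] a(2)] .
  then show "a \<otimes> b \<in> {a \<in> carrier F. [t a = 1] (mod M)}" using a b by simp
qed (use t_one in auto)

lemma kernel_subgroup: "subgroup {a \<in> carrier F. [t a = 1] (mod M) \<and> [c a = 0] (mod M)} F"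
proof (rule subgroupI)
  fix a assume "a \<in> {a \<in> carrier F. [t a = 1] (mod M) \<and> [c a = 0] (mod M)}"
  then have a: "a \<in> carrier F" "[t a = 1] (mod M)" "[c a = 0] (mod M)" by auto
  have "[t (inv a) = 1] (mod M)"
    using subgroup.m_inv_closed[OF unipotent_subgroup] a by auto
  have "[c (inv a \<otimes> a) = c (inv a) + t (inv a) * c a] (mod M)"
    using c_mult[OF inv_closed[OF a(1)] a(1)] .
  also have "[c (inv a) + t (inv a) * c a = c (inv a) + t (inv a) * 0] (mod M)"
    using a(3) by (intro cong_add cong_refl cong_scalar_left)
  finally have "[c \<one> = c (inv a)] (mod M)" using a(1) by simp
  from cong_trans[OF cong_sym[OF this] c_one] have "[c (inv a) = 0] (mod M)" .
  with \<open>[t (inv a) = 1] (mod M)\<close> a show "inv a \<in> {a \<in> carrier F. [t a = 1] (mod M) \<and> [c a = 0] (mod M)}"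
    by simp
next
  fix a b assume "a \<in> {a \<in> carrier F. [t a = 1] (mod M) \<and> [c a = 0] (mod M)}"
    "b \<in> {a \<in> carrier F. [t a = 1] (mod M) \<and> [c a = 0] (mod M)}"
  then have a: "a \<in> carrier F" "[t a = 1] (mod M)" "[c a = 0] (mod M)"
    and b: "b \<in> carrier F" "[t b = 1] (mod M)" "[c b = 0] (mod M)" by auto
  have "[t (a \<otimes> b) = 1] (mod M)" using cong_trans[OF t_mult_unipotent[OF a(1) b(1,2)] a(2)] .
  moreover have "[c (a \<otimes> b) = 0] (mod M)"
    using cong_trans[OF c_mult_unipotent[OF a(1) b(1) a(2)] cong_add[OF a(3) b(3)]] by simp
  ultimately show "a \<otimes> b \<in> {a \<in> carrier F. [t a = 1] (mod M) \<and> [c a = 0] (mod M)}" using a b by simp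
qed (use t_one c_one in auto)

end

locale continuous_crossed_hom_mod = crossed_hom_mod +
  fixes T :: "'a topology"
  assumes topspace_eq: "topspace T = carrier F"
    and t_open_fibres: "openin T {a \<in> carrier F. t a = v}"
    and c_open_fibres: "openin T {a \<in> carrier F. c a = v}"
begin

lemma closed_derived_unipotent:
  assumes "S \<subseteq> carrier F"
  shows "closed_derived F T S \<subseteq> {a \<in> carrier F. [t a = 1] (mod M)}"
proof (rule closed_derived_subset[OF is_group unipotent_subgroup])
  show "closedin T {a \<in> carrier F. [t a = 1] (mod M)}"
    using closedin_of_open_fibres[of T t] t_open_fibres by (simp add: topspace_eq)
  show "comm F a b \<in> {a \<in> carrier F. [t a = 1] (mod M)}" if "a \<in> S" "b \<in> S" for a b
  proof -
    have "a \<in> carrier F" "b \<in> carrier F" using that assms by auto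
    then show ?thesis using t_comm by simp
  qed
qed

lemma closed_derived_closed_derived_kernel:
  assumes "S \<subseteq> carrier F"
  shows "closed_derived F T (closed_derived F T S)
           \<subseteq> {a \<in> carrier F. [t a = 1] (mod M) \<and> [c a = 0] (mod M)}"
proof (rule closed_derived_subset[OF is_group kernel_subgroup])
  have "closedin T ({a \<in> topspace T. [t a = 1] (mod M)} \<inter> {a \<in> topspace T. [c a = 0] (mod M)})"
    using closedin_of_open_fibres[of T t] closedin_of_open_fibres[of T c] t_open_fibres c_open_fibres
    by (intro closedin_Int) (simp_all add: topspace_eq)
  then show "closedin T {a \<in> carrier F. [t a = 1] (mod M) \<and> [c a = 0] (mod M)}"
    by (simp add: topspace_eq Collect_conj_eq[symmetric] conj_ac)
  fix a b assume "a \<in> closed_derived F T S" "b \<in> closed_derived F T S"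
  then have "a \<in> carrier F" "b \<in> carrier F" "[t a = 1] (mod M)" "[t b = 1] (mod M)"
    using closed_derived_unipotent[OF assms] by auto
  then show "comm F a b \<in> {a \<in> carrier F. [t a = 1] (mod M) \<and> [c a = 0] (mod M)}"
    using t_comm c_comm_unipotents by simp
qed

end

definition add_mod_group :: "nat \<Rightarrow> nat monoid" where
  "add_mod_group p = \<lparr>carrier = {..<p}, mult = (\<lambda>a b. (a + b) mod p), one = 0\<rparr>"

lemma add_mod_group_simps [simp]:
  "carrier (add_mod_group p) = {..<p}"
  "a \<otimes>\<^bsub>add_mod_group p\<^esub> b = (a + b) mod p"
  "\<one>\<^bsub>add_mod_group p\<^esub> = 0"
  by (simp_all add: add_mod_group_def)

lemma add_mod_group_comm_group:
  assumes "p > 0"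
  shows "comm_group (add_mod_group p)"
proof (rule comm_groupI)
  fix a assume "a \<in> carrier (add_mod_group p)"
  then show "\<exists>b\<in>carrier (add_mod_group p). b \<otimes>\<^bsub>add_mod_group p\<^esub> a = \<one>\<^bsub>add_mod_group p\<^esub>"
    using assms by (intro bexI[of _ "(p - a) mod p"]) (auto simp: mod_add_left_eq)
qed (use assms in \<open>auto simp: mod_add_left_eq mod_add_right_eq ac_simps\<close>)

lemma add_mod_group_nat_pow: "a [^]\<^bsub>add_mod_group p\<^esub> (k :: nat) = k * a mod p"
  by (induction k) (simp_all add: add_mod_group_def mod_add_right_eq add.commute)

lemma hom_comm_eq_one:
  assumes "group G" "comm_group H" "h \<in> hom G H" "a \<in> carrier G" "b \<in> carrier G"
  shows "h (comm G a b) = \<one>\<^bsub>H\<^esub>"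
proof -
  interpret H: comm_group H by (rule assms(2))
  interpret group_hom G H h
    using assms(1-3) H.is_group by (simp add: group_hom_def group_hom_axioms_def)
  have ab: "h a \<in> carrier H" "h b \<in> carrier H" using assms(4,5) by simp_all
  have "h (comm G a b) = inv\<^bsub>H\<^esub> (h b \<otimes>\<^bsub>H\<^esub> h a) \<otimes>\<^bsub>H\<^esub> (h a \<otimes>\<^bsub>H\<^esub> h b)"
    using assms(4,5) ab by (simp add: comm_def H.inv_mult_group H.m_assoc)
  then show ?thesis using ab by (simp add: H.m_comm[of "h b"])
qed

lemma kernel_cont_hom_discrete:
  assumes "group G" "group H" "topspace T = carrier G"
    and h: "h \<in> cont_hom G T H (discrete_topology (carrier H))"
  shows "kernel G H h \<lhd> G" and "closedin T (kernel G H h)"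
proof -
  show "kernel G H h \<lhd> G"
    using assms h by (intro group_hom.normal_kernel) (simp add: group_hom_def group_hom_axioms_def cont_hom_def)
  have "closedin T {a \<in> topspace T. h a \<in> {\<one>\<^bsub>H\<^esub>}}"
    using h by (intro closedin_continuous_map_preimage) (auto simp: cont_hom_def group.is_monoid[OF assms(2)])
  then show "closedin T (kernel G H h)" by (simp add: kernel_def assms(3))
qed

lemma closed_derived_subset_kernel:
  assumes G: "group G" and H: "comm_group H" and top: "topspace T = carrier G"
    and h: "h \<in> cont_hom G T H (discrete_topology (carrier H))" and S: "S \<subseteq> carrier G"
  shows "closed_derived G T S \<subseteq> kernel G H h"
proof (rule closed_derived_subset[OF G])
  show "subgroup (kernel G H h) G" "closedin T (kernel G H h)"
    using kernel_cont_hom_discrete[OF G comm_group.axioms(2)[OF H] top h] by (simp_all add: normal_imp_subgroup)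
  show "comm G a b \<in> kernel G H h" if "a \<in> S" "b \<in> S" for a b
  proof -
    have ab: "a \<in> carrier G" "b \<in> carrier G" using that S by auto
    have "h \<in> hom G H" using h by (simp add: cont_hom_def)
    then have "h (comm G a b) = \<one>\<^bsub>H\<^esub>" using hom_comm_eq_one[OF G H _ ab] by blast
    then show ?thesis using ab by (simp add: kernel_def group.comm_closed[OF G])
  qed
qed

lemma group_hom_eq_if_kernel_subset:
  assumes "group_hom F G \<pi>" "group_hom F H h"
    and ker: "\<And>a. a \<in> carrier F \<Longrightarrow> \<pi> a = \<one>\<^bsub>G\<^esub> \<Longrightarrow> h a = \<one>\<^bsub>H\<^esub>"
    and ab: "a \<in> carrier F" "b \<in> carrier F" "\<pi> a = \<pi> b"
  shows "h a = h b"
proof -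
  interpret \<pi>: group_hom F G \<pi> by (rule assms(1))
  interpret h: group_hom F H h by (rule assms(2))
  have "\<pi> (inv\<^bsub>F\<^esub> b \<otimes>\<^bsub>F\<^esub> a) = \<one>\<^bsub>G\<^esub>" using ab by simp
  then have "inv\<^bsub>H\<^esub> (h b) \<otimes>\<^bsub>H\<^esub> h a = \<one>\<^bsub>H\<^esub>" using ker[of "inv\<^bsub>F\<^esub> b \<otimes>\<^bsub>F\<^esub> a"] ab by simp
  then have "h a = h b \<otimes>\<^bsub>H\<^esub> \<one>\<^bsub>H\<^esub>"
    by (rule iffD1[OF h.H.inv_solve_left'[OF h.H.one_closed h.hom_closed[OF ab(2)] h.hom_closed[OF ab(1)]]])
  then show ?thesis using h.hom_closed[OF ab(2)] by simp
qed

text \<open>Since \<open>F\<close> is compact and \<open>G\<close> Hausdorff, \<open>\<pi>\<close> is a quotient map, so a continuous homomorphism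
  \<open>F \<rightarrow> \<int>/p\<close> killing the kernel of \<open>\<pi>\<close> descends continuously to \<open>G\<close>; as the orientation is
  trivial modulo \<open>p\<close>, the descended homomorphism is a \<open>1\<close>-cocycle modulo \<open>p\<close>.\<close>
lemma cocycle_mod_prime_of_hom:
  assumes F: "group F" and G: "group G"
    and topF: "topspace TF = carrier F" and topG: "topspace TG = carrier G"
    and cF: "compact_space TF" and hG: "Hausdorff_space TG"
    and \<pi>: "\<pi> \<in> cont_hom F TF G TG" "\<pi> ` carrier F = carrier G"
    and h: "h \<in> cont_hom F TF (add_mod_group p) (discrete_topology {..<p})" and p: "p > 0"
    and ker: "\<And>a. a \<in> carrier F \<Longrightarrow> \<pi> a = \<one>\<^bsub>G\<^esub> \<Longrightarrow> h a = 0"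
    and \<theta>: "\<And>g. g \<in> carrier G \<Longrightarrow> \<theta> g 1 = 1"
  shows "\<exists>c. cocycle p G TG \<theta> 1 c \<and> (\<forall>a\<in>carrier F. c (\<pi> a) = int (h a))"
proof -
  interpret H: comm_group "add_mod_group p" using add_mod_group_comm_group[OF p] .
  interpret hF: group_hom F "add_mod_group p" h
    using F H.is_group h by (simp add: group_hom_def group_hom_axioms_def cont_hom_def)
  interpret \<pi>F: group_hom F G \<pi>
    using F G \<pi>(1) by (simp add: group_hom_def group_hom_axioms_def cont_hom_def)
  have h_eq: "h a = h b" if "a \<in> topspace TF" "b \<in> topspace TF" "\<pi> a = \<pi> b" for a b
    by (rule group_hom_eq_if_kernel_subset[OF \<pi>F.group_hom_axioms hF.group_hom_axioms])
      (use ker that in \<open>simp_all add: topF\<close>)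
  have q: "quotient_map TF TG \<pi>"
    using \<pi> topF topG cF hG by (intro continuous_imp_quotient_map) (auto simp: cont_hom_def)
  have hc: "continuous_map TF (discrete_topology {..<p}) h" using h by (simp add: cont_hom_def)
  obtain g where g: "continuous_map TG (discrete_topology {..<p}) g"
      "g ` topspace TG = h ` topspace TF" "\<And>a. a \<in> topspace TF \<Longrightarrow> g (\<pi> a) = h a"
  proof (rule quotient_map_lift_exists[OF q hc])
    show "\<And>a b. a \<in> topspace TF \<Longrightarrow> b \<in> topspace TF \<Longrightarrow> \<pi> a = \<pi> b \<Longrightarrow> h a = h b"
      by (rule h_eq)
  qed (rule that)
  have g_lt: "g y < p" if "y \<in> carrier G" for y
    using continuous_map_image_subset_topspace[OF g(1)] that by (auto simp: topG)
  define c where "c y = int (g y)" for y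
  have c_\<pi>: "c (\<pi> a) = int (h a)" if "a \<in> carrier F" for a
    using g(3) that by (simp add: c_def topF)
  have c_nonneg: "0 \<le> c y" and c_less: "c y < int p ^ 1" if "y \<in> carrier G" for y
    using g_lt that by (simp_all add: c_def)
  have c_open: "openin TG {y \<in> carrier G. c y = v}" for v
  proof -
    have eq: "{y \<in> carrier G. c y = v} = {y \<in> topspace TG. g y \<in> {k \<in> {..<p}. int k = v}}"
      using g_lt unfolding c_def topG by blast
    have "openin TG {y \<in> topspace TG. g y \<in> {k \<in> {..<p}. int k = v}}"
      by (rule openin_continuous_map_preimage[OF g(1)]) auto
    then show ?thesis by (simp only: eq)
  qed
  have c_mult: "c (y \<otimes>\<^bsub>G\<^esub> y') = (c y + \<theta> y 1 * c y') mod int p ^ 1"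
    if "y \<in> carrier G" "y' \<in> carrier G" for y y'
  proof -
    have "y \<in> \<pi> ` carrier F" "y' \<in> \<pi> ` carrier F" using \<pi>(2) that by simp_all
    then obtain a b where ab: "a \<in> carrier F" "b \<in> carrier F" "y = \<pi> a" "y' = \<pi> b" by blast
    then have "c (y \<otimes>\<^bsub>G\<^esub> y') = c (\<pi> (a \<otimes>\<^bsub>F\<^esub> b))" by simp
    also have "\<dots> = int ((h a + h b) mod p)" using ab c_\<pi>[of "a \<otimes>\<^bsub>F\<^esub> b"] by simp
    finally show ?thesis using ab \<theta> that by (simp add: zmod_int c_\<pi>)
  qed
  have "cocycle p G TG \<theta> 1 c"
    unfolding cocycle_def by (intro conjI ballI allI c_nonneg c_less c_open c_mult)
  then show ?thesis using c_\<pi> by blast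
qed

section \<open>The presentation\<close>

locale pro_p_presentation =
  fixes p d \<nu> n :: nat and f :: enat
    and F :: "('f, 'b) monoid_scheme" and TF :: "'f topology" and x :: "nat \<Rightarrow> 'f"
    and r :: "nat \<Rightarrow> 'f" and s :: 'f
    and G :: "('g, 'c) monoid_scheme" and TG :: "'g topology" and \<pi> :: "'f \<Rightarrow> 'g"
  assumes prime: "Factorial_Ring.prime p" and d_even: "even d" and d_ge_4: "d \<ge> 4" and n_ge_2: "n \<ge> 2"
    and f_ge_1: "f \<ge> 1" and f_ge_2: "p = 2 \<longrightarrow> f \<ge> 2"
    and free: "free_pro_p p F TF d x"
    and s_in: "s \<in> closed_derived F TF (closed_derived F TF (closed_gen F TF (x ` {3..d})))"
    and r0: "r 0 = qpow F p f (x 1) \<otimes>\<^bsub>F\<^esub> lcomm F (x 1) (x 2) n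
                   \<otimes>\<^bsub>F\<^esub> comm_prod F x (d div 2 - 1) \<otimes>\<^bsub>F\<^esub> s"
    and rj: "\<forall>j\<in>{1..\<nu>}. r j \<in> closed_derived F TF (closed_gen F TF (x ` {3..d}))"
    and G_pro_p: "pro_p_group p G TG"
    and \<pi>_hom: "\<pi> \<in> cont_hom F TF G TG" and \<pi>_surj: "\<pi> ` carrier F = carrier G"
    and \<pi>_ker: "{a \<in> carrier F. \<pi> a = \<one>\<^bsub>G\<^esub>} = closed_normal_gen F TF (r ` {0..\<nu>})"
begin

lemma p_gt_1: "p > 1"
  using prime prime_gt_1_nat by blast

lemma F_pro_p: "pro_p_group p F TF"
  using free by (simp add: free_pro_p_def)

lemma topspace_F: "topspace TF = carrier F" and compact_F: "compact_space TF"
  using F_pro_p by (simp_all add: pro_p_group_def topgroup_def)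

lemma topspace_G: "topspace TG = carrier G" and Hausdorff_G: "Hausdorff_space TG"
  using G_pro_p by (simp_all add: pro_p_group_def topgroup_def)

sublocale F: group F
  using F_pro_p by (simp add: pro_p_group_def topgroup_def)

sublocale G: group G
  using G_pro_p by (simp add: pro_p_group_def topgroup_def)

sublocale \<pi>: group_hom F G \<pi>
  using \<pi>_hom by (simp add: group_hom_def group_hom_axioms_def cont_hom_def F.is_group G.is_group)

lemma x_carrier: "i \<in> {1..d} \<Longrightarrow> x i \<in> carrier F"
  using free by (simp add: free_pro_p_def)

definition comm_pairs :: nat where
  "comm_pairs = d div 2 - 1"

lemma d_eq: "d = 2 * comm_pairs + 2"
  using d_even d_ge_4 by (auto simp: comm_pairs_def elim!: evenE)

lemma r0_eq: "r 0 = qpow F p f (x 1) \<otimes>\<^bsub>F\<^esub> lcomm F (x 1) (x 2) n \<otimes>\<^bsub>F\<^esub> comm_prod F x comm_pairs \<otimes>\<^bsub>F\<^esub> s"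
  using r0 by (simp add: comm_pairs_def)

lemma x_comm_pairs_carrier: "j < comm_pairs \<Longrightarrow> x (2 * j + 3) \<in> carrier F \<and> x (2 * j + 4) \<in> carrier F"
  using x_carrier d_eq by simp

lemma closed_gen_S_subset: "closed_gen F TF (x ` {3..d}) \<subseteq> carrier F"
  using closed_gen_subset_topspace[of F TF] by (simp add: topspace_F)

lemma closed_derived_subset_carrier: "closed_derived F TF A \<subseteq> carrier F"
  using closed_derived_subset_topspace[of F TF] by (simp add: topspace_F)

lemma relator_carrier:
  assumes "j \<in> {0..\<nu>}"
  shows "r j \<in> carrier F"
proof (cases "j = 0")
  case True
  have "comm_prod F x comm_pairs \<in> carrier F"
    using x_comm_pairs_carrier by (intro comm_prod_in_subgroup[OF F.subgroup_self]) simp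
  moreover have "x 1 \<in> carrier F" "x 2 \<in> carrier F" "s \<in> carrier F"
    using x_carrier d_ge_4 closed_derived_subset_carrier s_in by auto
  ultimately show ?thesis using True by (simp add: r0_eq)
next
  case False
  then show ?thesis using assms rj closed_derived_subset_carrier by fastforce
qed

lemma \<pi>_relator: "\<pi> (r 0) = \<one>\<^bsub>G\<^esub>"
proof -
  have "r 0 \<in> {inv\<^bsub>F\<^esub> g \<otimes>\<^bsub>F\<^esub> a \<otimes>\<^bsub>F\<^esub> g | g a. g \<in> carrier F \<and> a \<in> r ` {0..\<nu>}}"
    using relator_carrier[of 0] by (intro CollectI exI[of _ "\<one>\<^bsub>F\<^esub>"] exI[of _ "r 0"]) auto
  then have "r 0 \<in> generate F {inv\<^bsub>F\<^esub> g \<otimes>\<^bsub>F\<^esub> a \<otimes>\<^bsub>F\<^esub> g | g a. g \<in> carrier F \<and> a \<in> r ` {0..\<nu>}}"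
    by (rule generate.incl)
  then have "r 0 \<in> closed_normal_gen F TF (r ` {0..\<nu>})"
    using F.generate_incl relator_carrier topspace_F
    unfolding closed_normal_gen_def closed_gen_def by (intro closure_of_subset_Int[THEN subsetD]) auto
  then show ?thesis using \<pi>_ker by blast
qed

lemma relator_in_kernel_hom_mod_p:
  assumes h: "h \<in> cont_hom F TF (add_mod_group p) (discrete_topology {..<p})" and j: "j \<in> {0..\<nu>}"
  shows "r j \<in> kernel F (add_mod_group p) h"
proof -
  let ?K = "kernel F (add_mod_group p) h"
  have H: "comm_group (add_mod_group p)" using p_gt_1 by (simp add: add_mod_group_comm_group)
  have h': "h \<in> cont_hom F TF (add_mod_group p) (discrete_topology (carrier (add_mod_group p)))"
    using h by simp
  interpret h: group_hom F "add_mod_group p" h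
    using h H by (simp add: group_hom_def group_hom_axioms_def cont_hom_def comm_group_def F.is_group)
  have K: "subgroup ?K F" by (rule h.subgroup_kernel)
  have derived: "closed_derived F TF A \<subseteq> ?K" if "A \<subseteq> carrier F" for A
    by (rule closed_derived_subset_kernel[OF F.is_group H topspace_F h' that])
  have comm: "comm F a b \<in> ?K" if "a \<in> carrier F" "b \<in> carrier F" for a b
    using hom_comm_eq_one[OF F.is_group H h.homh that] that by (simp add: kernel_def)
  show ?thesis
  proof (cases "j = 0")
    case False
    then show ?thesis using j rj derived[OF closed_gen_S_subset] by auto
  next
    case True
    have x12: "x 1 \<in> carrier F" "x 2 \<in> carrier F" using x_carrier d_ge_4 by auto
    have "qpow F p f (x 1) \<in> ?K"
    proof (cases f)
      case (enat e)
      then have "e \<ge> 1" using f_ge_1 by (simp add: one_enat_def)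
      then have "h (x 1 [^]\<^bsub>F\<^esub> p ^ e) = 0"
        using x12 by (simp add: h.hom_nat_pow add_mod_group_nat_pow power_eq_if)
      then show ?thesis using enat x12 by (simp add: qpow_def kernel_def)
    qed (simp add: qpow_def subgroup.one_closed[OF K])
    moreover have "lcomm F (x 1) (x 2) n \<in> ?K"
      using n_ge_2 x12 comm by (cases n) simp_all
    moreover have "comm_prod F x comm_pairs \<in> ?K"
      using x_comm_pairs_carrier comm by (intro comm_prod_in_subgroup[OF K]) simp
    moreover have "s \<in> ?K" using s_in derived[OF closed_derived_subset_carrier] by blast
    ultimately show ?thesis using True subgroup.m_closed[OF K] by (simp add: r0_eq)
  qed
qed

lemma hom_mod_p_vanishes_on_kernel:
  assumes h: "h \<in> cont_hom F TF (add_mod_group p) (discrete_topology {..<p})"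
    and a: "a \<in> carrier F" "\<pi> a = \<one>\<^bsub>G\<^esub>"
  shows "h a = 0"
proof -
  have H: "group (add_mod_group p)"
    using comm_group.axioms(2)[OF add_mod_group_comm_group] p_gt_1 by simp
  have h': "h \<in> cont_hom F TF (add_mod_group p) (discrete_topology (carrier (add_mod_group p)))"
    using h by simp
  have "r ` {0..\<nu>} \<subseteq> kernel F (add_mod_group p) h" using relator_in_kernel_hom_mod_p[OF h] by blast
  then have "closed_normal_gen F TF (r ` {0..\<nu>}) \<subseteq> kernel F (add_mod_group p) h"
    using kernel_cont_hom_discrete[OF F.is_group H topspace_F h']
    by (intro closed_normal_gen_subset[OF F.is_group]) simp_all
  moreover have "a \<in> closed_normal_gen F TF (r ` {0..\<nu>})" using a \<pi>_ker by blast
  ultimately show ?thesis by (auto simp: kernel_def)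
qed

lemma orientation_x_unit:
  assumes "orientation p G TG \<theta>" "i \<in> {1..d}"
  shows "\<theta> (\<pi> (x i)) \<in> Zp p" "\<theta> (\<pi> (x i)) 1 = 1"
  using orientation_Zp[OF assms(1)] orientation_level_one[OF assms(1) p_gt_1] x_carrier[OF assms(2)]
  by simp_all

lemma kummerian_basis_lift:
  assumes or: "orientation p G TG \<theta>" and ku: "kummerian p G TG \<theta>" and k: "k \<ge> 1" and i0: "i0 \<in> {1..d}"
  obtains c where "cocycle p G TG \<theta> k c"
    "\<And>i. i \<in> {1..d} \<Longrightarrow> [c (\<pi> (x i)) = (if i = i0 then 1 else 0)] (mod int p)"
proof -
  define y where "y i = (if i = i0 then 1 else 0 :: nat)" for i
  have Z: "group (add_mod_group p) \<and> finite (carrier (add_mod_group p))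
      \<and> (\<exists>e. card (carrier (add_mod_group p)) = p ^ e) \<and> (\<forall>i\<in>{1..d}. y i \<in> carrier (add_mod_group p))"
    using p_gt_1 comm_group.axioms(2)[OF add_mod_group_comm_group, of p]
    by (auto simp: y_def intro: exI[of _ 1])
  have "\<forall>(H :: nat monoid) y. group H \<and> finite (carrier H) \<and> (\<exists>e. card (carrier H) = p ^ e)
      \<and> (\<forall>i\<in>{1..d}. y i \<in> carrier H) \<longrightarrow>
      (\<exists>!h. h \<in> cont_hom F TF H (discrete_topology (carrier H)) \<and> h \<in> extensional (carrier F)
        \<and> (\<forall>i\<in>{1..d}. h (x i) = y i))"
    using free unfolding free_pro_p_def by (elim conjE)
  from this[rule_format, OF Z] obtain h where h: "h \<in> cont_hom F TF (add_mod_group p) (discrete_topology {..<p})"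
    and hx: "\<And>i. i \<in> {1..d} \<Longrightarrow> h (x i) = y i"
    by auto
  have p0: "p > 0" using p_gt_1 by simp
  obtain c1 where c1: "cocycle p G TG \<theta> 1 c1" "\<forall>a\<in>carrier F. c1 (\<pi> a) = int (h a)"
    using cocycle_mod_prime_of_hom[where \<theta> = \<theta>, OF F.is_group G.is_group topspace_F topspace_G compact_F Hausdorff_G
        \<pi>_hom \<pi>_surj h p0 hom_mod_p_vanishes_on_kernel[OF h] orientation_level_one[OF or p_gt_1]]
    by blast
  obtain c b where c: "cocycle p G TG \<theta> k c" and b: "coboundary p G \<theta> 1 b"
    and cb: "\<And>g. g \<in> carrier G \<Longrightarrow> c g mod int p = (c1 g + b g) mod int p"
    using ku k c1(1) unfolding kummerian_def by blast
  have b0: "b g = 0" if "g \<in> carrier G" for g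
    using b orientation_level_one[OF or p_gt_1 that] that unfolding coboundary_def by auto
  show ?thesis
  proof (rule that[OF c])
    fix i assume i: "i \<in> {1..d}"
    then have "c (\<pi> (x i)) mod int p = int (y i) mod int p"
      using cb[of "\<pi> (x i)"] b0[of "\<pi> (x i)"] c1(2) hx[OF i] x_carrier[OF i] by simp
    then show "[c (\<pi> (x i)) = (if i = i0 then 1 else 0)] (mod int p)"
      by (simp add: cong_def y_def)
  qed
qed

lemma cocycle_pullback:
  assumes or: "orientation p G TG \<theta>" and c: "cocycle p G TG \<theta> k c"
  shows "continuous_crossed_hom_mod F (\<lambda>a. \<theta> (\<pi> a) k) (\<lambda>a. c (\<pi> a)) (int p ^ k) TF"
proof (intro continuous_crossed_hom_mod.intro crossed_hom_mod.intro crossed_hom_mod_axioms.intro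
    continuous_crossed_hom_mod_axioms.intro F.is_group)
  fix a b assume a: "a \<in> carrier F" and b: "b \<in> carrier F"
  show "coprime (\<theta> (\<pi> a) k) (int p ^ k)"
    using Zp_level_coprime[OF orientation_Zp[OF or \<pi>.hom_closed[OF a]]
        orientation_level_one[OF or p_gt_1 \<pi>.hom_closed[OF a]]] .
  show "[\<theta> (\<pi> (a \<otimes>\<^bsub>F\<^esub> b)) k = \<theta> (\<pi> a) k * \<theta> (\<pi> b) k] (mod int p ^ k)"
    using or a b by (simp add: orientation_def zp_mult_def cong_def)
  show "[c (\<pi> (a \<otimes>\<^bsub>F\<^esub> b)) = c (\<pi> a) + \<theta> (\<pi> a) k * c (\<pi> b)] (mod int p ^ k)"
    using c a b by (simp add: cocycle_def cong_def)
next
  fix v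
  have "openin TF {a \<in> topspace TF. \<pi> a \<in> {g \<in> carrier G. \<theta> g k = v}}"
    using \<pi>_hom or by (intro openin_continuous_map_preimage) (auto simp: cont_hom_def orientation_def)
  moreover have "{a \<in> topspace TF. \<pi> a \<in> {g \<in> carrier G. \<theta> g k = v}} = {a \<in> carrier F. \<theta> (\<pi> a) k = v}"
    using \<pi>.hom_closed by (auto simp: topspace_F)
  ultimately show "openin TF {a \<in> carrier F. \<theta> (\<pi> a) k = v}" by simp
  have "openin TF {a \<in> topspace TF. \<pi> a \<in> {g \<in> carrier G. c g = v}}"
    using \<pi>_hom c by (intro openin_continuous_map_preimage) (auto simp: cont_hom_def cocycle_def)
  moreover have "{a \<in> topspace TF. \<pi> a \<in> {g \<in> carrier G. c g = v}} = {a \<in> carrier F. c (\<pi> a) = v}"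
    using \<pi>.hom_closed by (auto simp: topspace_F)
  ultimately show "openin TF {a \<in> carrier F. c (\<pi> a) = v}" by simp
qed (rule topspace_F)

lemma cocycle_relation:
  assumes or: "orientation p G TG \<theta>" and c: "cocycle p G TG \<theta> k c"
  shows "[(\<Sum>i\<in>{1..d}. relator_coeff (int p ^ k) p f n (\<lambda>i. \<theta> (\<pi> (x i)) k) i * c (\<pi> (x i))) = 0]
           (mod int p ^ k)"
proof -
  interpret continuous_crossed_hom_mod F "\<lambda>a. \<theta> (\<pi> a) k" "\<lambda>a. c (\<pi> a)" "int p ^ k" TF
    by (rule cocycle_pullback[OF or c])
  have s: "s \<in> carrier F" "[\<theta> (\<pi> s) k = 1] (mod int p ^ k)" "[c (\<pi> s) = 0] (mod int p ^ k)"
    using closed_derived_closed_derived_kernel[OF closed_gen_S_subset] s_in by auto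
  have r: "[\<theta> (\<pi> (r 0)) k = 1] (mod int p ^ k)" "[c (\<pi> (r 0)) = 0] (mod int p ^ k)"
    using t_one c_one by (simp_all add: \<pi>_relator)
  show ?thesis
    using c_relator[of comm_pairs x n s "r 0" p f, OF _ _ s r0_eq r] x_carrier n_ge_2
    unfolding d_eq[symmetric] by simp
qed

lemma kummerian_relator_coeff_dvd:
  assumes or: "orientation p G TG \<theta>" and ku: "kummerian p G TG \<theta>" and k: "k \<ge> 1" and i: "i \<in> {1..d}"
  shows "int p ^ k dvd relator_coeff (int p ^ k) p f n (\<lambda>i. \<theta> (\<pi> (x i)) k) i"
proof (rule power_dvd_coefficients_of_basis_lifts[OF _ _ i])
  fix i0 assume "i0 \<in> {1..d}"
  then obtain c where c: "cocycle p G TG \<theta> k c"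
    and cx: "\<And>i. i \<in> {1..d} \<Longrightarrow> [c (\<pi> (x i)) = (if i = i0 then 1 else 0)] (mod int p)"
    using kummerian_basis_lift[OF or ku k] by blast
  show "\<exists>c. (\<forall>i\<in>{1..d}. [c i = (if i = i0 then 1 else 0)] (mod int p))
      \<and> [(\<Sum>i\<in>{1..d}. relator_coeff (int p ^ k) p f n (\<lambda>i. \<theta> (\<pi> (x i)) k) i * c i) = 0] (mod int p ^ k)"
    using cx cocycle_relation[OF or c] by (intro exI[of _ "\<lambda>i. c (\<pi> (x i))"]) simp
qed simp

lemma kummerian_imp_x_trivial:
  assumes or: "orientation p G TG \<theta>" and ku: "kummerian p G TG \<theta>" and i: "i \<in> {3..d}"
  shows "\<theta> (\<pi> (x i)) = zp_one p"
proof -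
  obtain j where j: "j < comm_pairs" "i = 2 * j + 3 \<or> i = 2 * j + 4"
  proof (rule that)
    have "3 \<le> i" "i \<le> 2 * comm_pairs + 2" using i d_eq by auto
    then show "(i - 3) div 2 < comm_pairs" "i = 2 * ((i - 3) div 2) + 3 \<or> i = 2 * ((i - 3) div 2) + 4"
      by presburger+
  qed
  have j34: "2 * j + 3 \<in> {1..d}" "2 * j + 4 \<in> {1..d}" using j(1) d_eq by auto
  have "[\<theta> (\<pi> (x i)) k = 1] (mod int p ^ k)" for k
  proof (cases "k = 0")
    case False
    define u \<mu> where "u l = \<theta> (\<pi> (x l)) k" and "\<mu> l = modular_inverse (int p ^ k) (u l)" for l
    have \<mu>_cop: "coprime (\<mu> l) (int p ^ k)" if "l \<in> {1..d}" for l
      unfolding \<mu>_def u_def using Zp_level_coprime[OF orientation_x_unit[OF or that]] by (rule coprime_modular_inverse)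
    have cop: "coprime (\<mu> (2 * j + 3) * \<mu> (2 * j + 4)) (int p ^ k)"
      using \<mu>_cop[OF j34(1)] \<mu>_cop[OF j34(2)] by (simp only: coprime_mult_left_iff)
    have "int p ^ k dvd \<mu> (2 * j + 3) * \<mu> (2 * j + 4) * (u i - 1)"
      using j(2)
    proof
      assume "i = 2 * j + 3"
      then show ?thesis using kummerian_relator_coeff_dvd[OF or ku _ j34(2), of k] False
        by (simp add: relator_coeff_simps u_def \<mu>_def)
    next
      assume "i = 2 * j + 4"
      then show ?thesis using kummerian_relator_coeff_dvd[OF or ku _ j34(1), of k] False
        by (simp add: relator_coeff_simps u_def \<mu>_def)
    qed
    then have "int p ^ k dvd u i - 1" using cop by (metis coprime_commute coprime_dvd_mult_right_iff)
    then show ?thesis by (simp add: u_def cong_iff_dvd_diff)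
  qed simp
  then show ?thesis using Zp_eq_zp_one_iff orientation_x_unit(1)[OF or] i by auto
qed

lemma kummerian_imp_x2_equation:
  assumes or: "orientation p G TG \<theta>" and ku: "kummerian p G TG \<theta>" and x1: "\<theta> (\<pi> (x 1)) = zp_one p"
  shows "zp_pow p (zp_add p (zp_inv p (\<theta> (\<pi> (x 2)))) (zp_neg p (zp_one p))) n = zp_neg p (zp_q p f)"
proof
  fix k
  have i12: "1 \<in> {1..d}" "2 \<in> {1..d}" using d_ge_4 by auto
  define \<mu> where "\<mu> = modular_inverse (int p ^ k) (\<theta> (\<pi> (x 2)) k)"
  have "[(\<mu> - 1) ^ n = - q_int p f] (mod int p ^ k)"
  proof (cases "k = 0")
    case False
    have M: "int p ^ k > 1" using p_gt_1 False by simp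
    then have u1: "\<theta> (\<pi> (x 1)) k = 1" using x1 by (simp add: zp_one_def zp_of_int_def)
    have "int p ^ k dvd relator_coeff (int p ^ k) p f n (\<lambda>i. \<theta> (\<pi> (x i)) k) 1"
      using False by (intro kummerian_relator_coeff_dvd[OF or ku _ i12(1)]) simp
    then have "int p ^ k dvd q_geom_sum p f 1 + modular_inverse (int p ^ k) 1 * (\<mu> - 1) ^ n"
      unfolding relator_coeff_simps(1) \<mu>_def u1 .
    then have "int p ^ k dvd q_int p f + (\<mu> - 1) ^ n" using M by (simp add: q_geom_sum_one)
    then show ?thesis by (simp add: cong_iff_dvd_diff add.commute)
  qed simp
  then show "zp_pow p (zp_add p (zp_inv p (\<theta> (\<pi> (x 2)))) (zp_neg p (zp_one p))) n k = zp_neg p (zp_q p f) k"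
    by (simp add: zp_pow_inv_minus_one_level[OF orientation_x_unit[OF or i12(2)]] zp_neg_zp_q_level cong_def \<mu>_def)
qed

lemma kummerian_imp_x2_trivial:
  assumes or: "orientation p G TG \<theta>" and ku: "kummerian p G TG \<theta>" and x1: "\<theta> (\<pi> (x 1)) \<noteq> zp_one p"
  shows "\<theta> (\<pi> (x 2)) = zp_one p"
proof -
  have i12: "1 \<in> {1..d}" "2 \<in> {1..d}" using d_ge_4 by auto
  obtain k0 where k0: "k0 \<ge> 1" "\<And>k. k \<ge> k0 \<Longrightarrow> \<not> int p ^ k0 dvd \<theta> (\<pi> (x 1)) k - 1"
    using Zp_neq_zp_one_not_dvd[OF orientation_x_unit(1)[OF or i12(1)] x1] by blast
  have "[\<theta> (\<pi> (x 2)) j = 1] (mod int p ^ j)" for j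
  proof (cases "j = 0")
    case False
    define k where "k = k0 + (n - 1) * j"
    define u \<mu> where "u l = \<theta> (\<pi> (x l)) k" and "\<mu> l = modular_inverse (int p ^ k) (u l)" for l
    have "j \<le> (n - 1) * j" using mult_le_mono1[of 1 "n - 1" j] n_ge_2 by linarith
    then have k: "k \<ge> k0" "k \<ge> j" "k \<ge> 1" using k0(1) unfolding k_def by linarith+
    have \<mu>_cop: "coprime (\<mu> l) (int p ^ k)" if "l \<in> {1..d}" for l
      unfolding \<mu>_def u_def using Zp_level_coprime[OF orientation_x_unit[OF or that]] by (rule coprime_modular_inverse)
    have cop: "coprime (\<mu> 1 * \<mu> 2) (int p ^ k)"
      using \<mu>_cop[OF i12(1)] \<mu>_cop[OF i12(2)] by (simp only: coprime_mult_left_iff)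
    have "int p ^ k dvd \<mu> 1 * \<mu> 2 * ((\<mu> 2 - 1) ^ (n - 1) * (u 1 - 1))"
      using kummerian_relator_coeff_dvd[OF or ku k(3) i12(2)] by (simp add: relator_coeff_simps u_def \<mu>_def ac_simps)
    then have "int p ^ (k0 + (n - 1) * j) dvd (\<mu> 2 - 1) ^ (n - 1) * (u 1 - 1)"
      using cop unfolding k_def by (metis coprime_commute coprime_dvd_mult_right_iff mult.assoc)
    moreover have "n - 1 \<ge> 1" using n_ge_2 by simp
    ultimately have "int p ^ j dvd \<mu> 2 - 1"
      using prime_power_dvd_of_dvd_power_mult[OF prime _ _ k0(2)[OF k(1)]] unfolding u_def by blast
    then have "[u 2 * \<mu> 2 = u 2 * 1] (mod int p ^ j)"
      by (intro cong_scalar_left) (simp add: cong_iff_dvd_diff)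
    moreover have "[u 2 * \<mu> 2 = 1] (mod int p ^ j)"
      unfolding \<mu>_def u_def using cong_modular_inverse1[OF Zp_level_coprime[OF orientation_x_unit[OF or i12(2)], of k]]
      by (rule cong_dvd_modulus) (simp add: k(2) le_imp_power_dvd)
    ultimately have "[u 2 = 1] (mod int p ^ j)" using cong_trans[OF cong_sym] by fastforce
    then show ?thesis
      using cong_trans[OF cong_sym[OF Zp_cong_level[OF orientation_x_unit(1)[OF or i12(2)] k(2)]]]
      by (simp add: u_def)
  qed simp
  then show ?thesis using Zp_eq_zp_one_iff orientation_x_unit(1)[OF or i12(2)] by blast
qed

lemma kummerian_imp_f_infinite:
  assumes or: "orientation p G TG \<theta>" and tf: "torsion_free_or p G \<theta>" and ku: "kummerian p G TG \<theta>"
    and x1: "\<theta> (\<pi> (x 1)) \<noteq> zp_one p"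
  shows "f = \<infinity>"
proof (rule ccontr)
  assume "f \<noteq> \<infinity>"
  then obtain e where e: "f = enat e" by (cases f) auto
  have e12: "e \<ge> 1" "p = 2 \<longrightarrow> e \<ge> 2"
    using f_ge_1 f_ge_2 e by (auto simp: one_enat_def numeral_eq_enat)
  have i12: "1 \<in> {1..d}" "2 \<in> {1..d}" using d_ge_4 by auto
  obtain k0 where k0: "k0 \<ge> 1" "\<And>k. k \<ge> k0 \<Longrightarrow> \<not> int p ^ k0 dvd \<theta> (\<pi> (x 1)) k - 1"
    using Zp_neq_zp_one_not_dvd[OF orientation_x_unit(1)[OF or i12(1)] x1] by blast
  define k where "k = k0 + e"
  define a where "a = \<theta> (\<pi> (x 1)) k"
  have k: "k \<ge> 1" "k \<ge> k0" using k0(1) by (auto simp: k_def)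
  have M: "int p ^ k > 1" using p_gt_1 k(1) by simp
  have x2: "\<theta> (\<pi> (x 2)) k = 1"
    using kummerian_imp_x2_trivial[OF or ku x1] M by (simp add: zp_one_def zp_of_int_def)
  have "int p ^ k dvd relator_coeff (int p ^ k) p f n (\<lambda>i. \<theta> (\<pi> (x i)) k) 1"
    by (rule kummerian_relator_coeff_dvd[OF or ku k(1) i12(1)])
  then have "int p ^ k dvd q_geom_sum p f a + modular_inverse (int p ^ k) a * (modular_inverse (int p ^ k) 1 - 1) ^ n"
    unfolding relator_coeff_simps(1) x2 a_def .
  then have "int p ^ k dvd (\<Sum>i<p ^ e. a ^ i)" using M n_ge_2 by (simp add: q_geom_sum_def e power_0_left)
  then have "int p ^ (k0 + e) dvd a ^ p ^ e - 1"
    unfolding power_diff_1_eq k_def by simp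
  moreover have "[a = 1] (mod int p)"
    unfolding a_def using Zp_level_cong_one[OF orientation_x_unit[OF or i12(1)] k(1)] .
  moreover have "p = 2 \<longrightarrow> [a = 1] (mod 4)"
  proof
    assume p2: "p = 2"
    then have "\<theta> (\<pi> (x 1)) 2 = 1" using tf x_carrier[OF i12(1)] by (simp add: torsion_free_or_def)
    moreover have "k \<ge> 2" using e12 p2 by (simp add: k_def)
    ultimately show "[a = 1] (mod 4)"
      using Zp_mod_power[OF orientation_x_unit(1)[OF or i12(1)], of 2 k] p2 by (simp add: a_def cong_def)
  qed
  ultimately show False
    using prime_power_not_dvd_power_prime_power_minus_one[OF prime _ _ k0(2)[OF k(2)]] by (simp add: a_def)
qed

lemma kummerian_imp_neg_q_in_ideal:
  assumes or: "orientation p G TG \<theta>" and tf: "torsion_free_or p G \<theta>" and ku: "kummerian p G TG \<theta>"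
  shows "zp_neg p (zp_q p f) \<in> zp_ideal_pow p n"
proof -
  have "zp_neg p (zp_q p f) n = 0"
  proof (cases "\<theta> (\<pi> (x 1)) = zp_one p")
    case True
    have "2 \<in> {1..d}" using d_ge_4 by auto
    from fun_cong[OF kummerian_imp_x2_equation[OF or ku True], of n]
    show ?thesis using zp_pow_inv_minus_one_vanishes_at_level[OF orientation_x_unit[OF or \<open>2 \<in> {1..d}\<close>]] by simp
  next
    case False
    then have "f = \<infinity>" by (rule kummerian_imp_f_infinite[OF or tf ku])
    then show ?thesis by (simp add: zp_neg_zp_q_level q_int_def)
  qed
  then show ?thesis using zp_neg_zp_q_in_Zp p_gt_1 by (simp add: zp_ideal_pow_def)
qed

end

theorem proposition3p8:
  fixes p d \<nu> n :: nat and f :: enat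
    and F :: "('f, 'b) monoid_scheme" and TF :: "'f topology" and x :: "nat \<Rightarrow> 'f"
    and r :: "nat \<Rightarrow> 'f" and s :: 'f
    and G :: "('g, 'c) monoid_scheme" and TG :: "'g topology" and \<pi> :: "'f \<Rightarrow> 'g"
  assumes "Factorial_Ring.prime p" and "even d" and "d \<ge> 4" and "n \<ge> 2"
    and "f \<ge> 1" and "p = 2 \<longrightarrow> f \<ge> 2"
    and free: "free_pro_p p F TF d x"
    and s_in: "s \<in> closed_derived F TF (closed_derived F TF (closed_gen F TF (x ` {3..d})))"
    and r0: "r 0 = qpow F p f (x 1) \<otimes>\<^bsub>F\<^esub> lcomm F (x 1) (x 2) n
                   \<otimes>\<^bsub>F\<^esub> comm_prod F x (d div 2 - 1) \<otimes>\<^bsub>F\<^esub> s"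
    and rj: "\<forall>j\<in>{1..\<nu>}. r j \<in> closed_derived F TF (closed_gen F TF (x ` {3..d}))"
    and Gpro: "pro_p_group p G TG"
    and pi_hom: "\<pi> \<in> cont_hom F TF G TG" and pi_surj: "\<pi> ` carrier F = carrier G"
    and pi_ker: "{a \<in> carrier F. \<pi> a = \<one>\<^bsub>G\<^esub>} = closed_normal_gen F TF (r ` {0..\<nu>})"
  shows "(\<forall>\<theta>. orientation p G TG \<theta> \<and> torsion_free_or p G \<theta> \<and> kummerian p G TG \<theta> \<longrightarrow>
            (\<forall>i\<in>{3..d}. \<theta> (\<pi> (x i)) = zp_one p)
            \<and> ((\<theta> (\<pi> (x 1)) = zp_one p
                 \<and> zp_pow p (zp_add p (zp_inv p (\<theta> (\<pi> (x 2)))) (zp_neg p (zp_one p))) n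
                     = zp_neg p (zp_q p f))
               \<or> (\<theta> (\<pi> (x 1)) \<noteq> zp_one p \<and> \<theta> (\<pi> (x 2)) = zp_one p \<and> f = \<infinity>)))
         \<and> (zp_neg p (zp_q p f) \<notin> zp_ideal_pow p n \<longrightarrow>
            (\<forall>\<theta>. orientation p G TG \<theta> \<and> torsion_free_or p G \<theta> \<longrightarrow> \<not> kummerian p G TG \<theta>))"
proof -
  interpret pro_p_presentation p d \<nu> n f F TF x r s G TG \<pi>
    by (rule pro_p_presentation.intro) (rule assms)+
  show ?thesis
  proof (intro conjI allI impI; elim conjE)
    fix \<theta> assume or: "orientation p G TG \<theta>" and tf: "torsion_free_or p G \<theta>" and ku: "kummerian p G TG \<theta>"
    show "\<forall>i\<in>{3..d}. \<theta> (\<pi> (x i)) = zp_one p" using kummerian_imp_x_trivial[OF or ku] by blast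
    show "(\<theta> (\<pi> (x 1)) = zp_one p
           \<and> zp_pow p (zp_add p (zp_inv p (\<theta> (\<pi> (x 2)))) (zp_neg p (zp_one p))) n = zp_neg p (zp_q p f))
         \<or> (\<theta> (\<pi> (x 1)) \<noteq> zp_one p \<and> \<theta> (\<pi> (x 2)) = zp_one p \<and> f = \<infinity>)"
      using kummerian_imp_x2_equation[OF or ku] kummerian_imp_x2_trivial[OF or ku] kummerian_imp_f_infinite[OF or tf ku] by blast
  next
    fix \<theta> assume "zp_neg p (zp_q p f) \<notin> zp_ideal_pow p n"
      and "orientation p G TG \<theta>" "torsion_free_or p G \<theta>"
    then show "\<not> kummerian p G TG \<theta>" using kummerian_imp_neg_q_in_ideal by blast
  qed
qed

end
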